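(* Let $m \geq 2$. Every $L \in \mathscr{C}(m)$ satisfies $g(L) \geq 2$. Moreover, for each integer $g \geq 2$ there are only finitely many languages $L\in\mathscr{C}(m)$ (over a fixed $m$-letter alphabet) with $g(L) = g$.
   Context: A DFA over a finite alphabet $\Sigma$ is $(Q,q_0,F,\delta)$ with total transition function $\delta:Q\times\Sigma\to Q$. Its underlying undirected multigraph has vertex set $Q$ and one edge joining $q$ and $\delta(q,a)$ for every $(q,a)$ (self-loops and parallel edges kept). A cycle of length $k$ is a closed walk of length $k$ in this multigraph; it is simple if no edge is used more than once. The genus of a finite multigraph is the least genus of a closed orientable surface into which it embeds; $g(A)$ is the genus of the underlying multigraph of $A$; $g(L)=\min\{g(A): A\text{ a DFA recognizing }L\}$. $\rho(m)=3$ if $m\geq 4$, $\rho(3)=4$, $\rho(2)=5$. $\mathscr{C}(m)$ is the class of regular languages over an $m$-letter alphabet whose minimal DFA has an underlying undirected multigraph with no simple cycle of length $\leq \rho(m)-1$. *)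

theory Defs
  imports Main "HOL-Library.Cardinality"
begin

text \<open>States are natural numbers (every finite DFA is isomorphic to one with such states);
  the alphabet is the finite type 'a, so m = CARD('a).  The transition function is total
  on the state set Q.\<close>

record 'a dfa =
  states :: "nat set"
  init   :: nat
  final  :: "nat set"
  trans  :: "nat \<Rightarrow> 'a \<Rightarrow> nat"

definition is_dfa :: "'a dfa \<Rightarrow> bool" where
  "is_dfa A \<longleftrightarrow> finite (states A) \<and> init A \<in> states A \<and> final A \<subseteq> states A
     \<and> (\<forall>q\<in>states A. \<forall>a. trans A q a \<in> states A)"

definition lang :: "'a dfa \<Rightarrow> 'a list set" where
  "lang A = {w. foldl (trans A) (init A) w \<in> final A}"

definition regular :: "'a list set \<Rightarrow> bool" where
  "regular L \<longleftrightarrow> (\<exists>A. is_dfa A \<and> lang A = L)"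

definition minimal_dfa :: "'a dfa \<Rightarrow> 'a list set \<Rightarrow> bool" where
  "minimal_dfa A L \<longleftrightarrow> is_dfa A \<and> lang A = L \<and>
     (\<forall>B. is_dfa B \<and> lang B = L \<longrightarrow> card (states A) \<le> card (states B))"

definition edges :: "'a dfa \<Rightarrow> (nat \<times> 'a) set" where
  "edges A = states A \<times> UNIV"

definition joins :: "'a dfa \<Rightarrow> nat \<times> 'a \<Rightarrow> nat \<Rightarrow> nat \<Rightarrow> bool" where
  "joins A e u v \<longleftrightarrow> (u = fst e \<and> v = trans A (fst e) (snd e))
                     \<or> (v = fst e \<and> u = trans A (fst e) (snd e))"

definition has_simple_cycle :: "'a dfa \<Rightarrow> nat \<Rightarrow> bool" where
  "has_simple_cycle A k \<longleftrightarrow> k \<ge> 1 \<and>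
     (\<exists>vs es. length vs = Suc k \<and> length es = k \<and> distinct es \<and> set es \<subseteq> edges A
        \<and> vs ! 0 = vs ! k \<and> (\<forall>i<k. joins A (es ! i) (vs ! i) (vs ! Suc i)))"

text \<open>Darts: each edge e gives two darts (e,True) (at the end fst e) and (e,False)
  (at the end \<delta>(e)).  The edge involution flips the Boolean.\<close>
definition darts :: "'a dfa \<Rightarrow> ((nat \<times> 'a) \<times> bool) set" where
  "darts A = edges A \<times> UNIV"

definition dart_vertex :: "'a dfa \<Rightarrow> (nat \<times> 'a) \<times> bool \<Rightarrow> nat" where
  "dart_vertex A d = (if snd d then fst (fst d) else trans A (fst (fst d)) (snd (fst d)))"

definition flip :: "(nat \<times> 'a) \<times> bool \<Rightarrow> (nat \<times> 'a) \<times> bool" where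
  "flip d = (fst d, \<not> snd d)"

definition orbit_of :: "('b \<Rightarrow> 'b) \<Rightarrow> 'b \<Rightarrow> 'b set" where
  "orbit_of f x = {(f ^^ n) x | n. True}"

text \<open>A rotation system: a permutation of the darts whose cycles are exactly the sets of
  darts at each vertex (a cyclic order of the darts around every vertex).\<close>
definition rotation_system :: "'a dfa \<Rightarrow> ((nat \<times> 'a) \<times> bool \<Rightarrow> (nat \<times> 'a) \<times> bool) \<Rightarrow> bool" where
  "rotation_system A \<sigma> \<longleftrightarrow> bij_betw \<sigma> (darts A) (darts A) \<and>
     (\<forall>d\<in>darts A. orbit_of \<sigma> d = {d'\<in>darts A. dart_vertex A d' = dart_vertex A d})"

text \<open>Faces of the embedding given by \<sigma>: orbits of \<sigma> \<circ> flip on the darts.\<close>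
definition num_faces :: "'a dfa \<Rightarrow> ((nat \<times> 'a) \<times> bool \<Rightarrow> (nat \<times> 'a) \<times> bool) \<Rightarrow> nat" where
  "num_faces A \<sigma> = card {orbit_of (\<sigma> \<circ> flip) d | d. d \<in> darts A}"

definition adj_rel :: "'a dfa \<Rightarrow> (nat \<times> nat) set" where
  "adj_rel A = {(u, v). \<exists>e\<in>edges A. joins A e u v}"

definition num_components :: "'a dfa \<Rightarrow> nat" where
  "num_components A = card (states A // ((adj_rel A)\<^sup>* \<inter> states A \<times> states A))"

text \<open>Genus of the underlying multigraph: least g such that some rotation system satisfies
  the Euler formula V - E + F = 2c - 2g (c = number of components; every vertex has
  positive degree since the alphabet is nonempty).  By the Heffter-Edmonds-Ringel
  rotation principle this is the least genus of an orientable surface into which the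
  multigraph embeds.\<close>
definition dfa_genus :: "'a dfa \<Rightarrow> nat" where
  "dfa_genus A = (LEAST g. \<exists>\<sigma>. rotation_system A \<sigma> \<and>
      int (card (states A)) - int (card (edges A)) + int (num_faces A \<sigma>)
        = 2 * int (num_components A) - 2 * int g)"

definition lang_genus :: "'a list set \<Rightarrow> nat" where
  "lang_genus L = (LEAST g. \<exists>A. is_dfa A \<and> lang A = L \<and> dfa_genus A = g)"

definition rho :: "nat \<Rightarrow> nat" where
  "rho m = (if m \<ge> 4 then 3 else if m = 3 then 4 else 5)"

definition classC :: "'a::finite list set set" where
  "classC = {L. regular L \<and> (\<exists>A. minimal_dfa A L \<and>
      (\<forall>k. k \<le> rho CARD('a) - 1 \<longrightarrow> \<not> has_simple_cycle A k))}"

end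

theory Submission
  imports Defs "HOL-Combinatorics.Permutations"
begin

(* Let A be the minimal DFA of L, B a DFA for L of genus g = g(L) and \<sigma> a rotation system of B
   realising it.  Adding edges one at a time changes faces minus twice components by exactly one (a
   transposition splits or merges face orbits), which yields Euler's formula and, for the
   spanning subgraph of edges leaving the n reachable states of B, the bound
   2g \<ge> 2 + (m - 1) n - F, where F counts the faces of that subgraph through such edges.
   The surjective homomorphism from the reachable part of B onto A maps each of these faces to a
   closed walk in A.  As A has no short simple cycles, faces have length at least 3 (m \<ge> 4),
   at least 4 (m = 3), or, for m = 2, length at least 4 with two backtracks on faces of length 4;
   backtracks are paid for by darts of B that the homomorphism collapses.  Counting darts gives
   10 g \<ge> 10 + |A|.  Hence g \<ge> 2, and a language of genus g has a minimal DFA with at most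
   10 g states; only finitely many languages are recognised by such automata. *)

type_synonym 'a dart = "(nat \<times> 'a) \<times> bool"

section \<open>Orbits of bijections of a finite set\<close>

lemma orbit_of_self: "x \<in> orbit_of f x"
  unfolding orbit_of_def by (auto intro: exI[of _ 0])

lemma funpow_in_orbit_of: "(f ^^ n) x \<in> orbit_of f x"
  unfolding orbit_of_def by auto

lemma orbit_of_step: "y \<in> orbit_of f x \<Longrightarrow> f y \<in> orbit_of f x"
  unfolding orbit_of_def by (auto intro: exI[of _ "Suc n" for n])

lemma orbit_of_trans:
  assumes "y \<in> orbit_of f x" "z \<in> orbit_of f y"
  shows "z \<in> orbit_of f x"
proof -
  obtain n m where "y = (f ^^ n) x" "z = (f ^^ m) y" using assms unfolding orbit_of_def by auto
  then have "z = (f ^^ (m + n)) x" by (simp add: funpow_add)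
  then show ?thesis using funpow_in_orbit_of by metis
qed

lemma orbit_of_subset:
  assumes "x \<in> S" and "\<And>y. y \<in> S \<Longrightarrow> f y \<in> S"
  shows "orbit_of f x \<subseteq> S"
proof -
  have "(f ^^ n) x \<in> S" for n by (induct n) (use assms in auto)
  then show ?thesis unfolding orbit_of_def by auto
qed

lemma funpow_in_invariant:
  assumes "f ` D \<subseteq> D" "x \<in> D"
  shows "(f ^^ n) x \<in> D"
proof -
  have "orbit_of f x \<subseteq> D" by (rule orbit_of_subset) (use assms in auto)
  then show ?thesis using funpow_in_orbit_of[of n f x] by blast
qed

lemma orbit_of_cong:
  assumes "\<And>y. y \<in> orbit_of f x \<Longrightarrow> f y = g y"
  shows "orbit_of f x = orbit_of g x"
proof -
  have "(f ^^ n) x = (g ^^ n) x" for n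
  proof (induct n)
    case (Suc n)
    have "f ((f ^^ n) x) = g ((f ^^ n) x)" by (rule assms[OF funpow_in_orbit_of])
    then show ?case using Suc by simp
  qed simp
  then show ?thesis unfolding orbit_of_def by auto
qed

lemma orbit_of_periodic:
  assumes "0 < p" and "(f ^^ p) x = x"
  shows "orbit_of f x = (\<lambda>k. (f ^^ k) x) ` {..<p}"
proof
  show "orbit_of f x \<subseteq> (\<lambda>k. (f ^^ k) x) ` {..<p}"
  proof
    fix y assume "y \<in> orbit_of f x"
    then obtain n where "y = (f ^^ n) x" unfolding orbit_of_def by blast
    then have "y = (f ^^ (n mod p)) x" using funpow_mod_eq[OF assms(2)] by simp
    then show "y \<in> (\<lambda>k. (f ^^ k) x) ` {..<p}" using assms(1) by simp
  qed
qed (auto intro: funpow_in_orbit_of)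

lemma least_period:
  assumes "0 < n" "(f ^^ n) x = x"
  obtains p where "0 < p" "(f ^^ p) x = x"
    "\<And>j. 0 < j \<Longrightarrow> j < p \<Longrightarrow> (f ^^ j) x \<noteq> x"
proof -
  obtain p where "0 < p \<and> (f ^^ p) x = x" "\<forall>j<p. \<not> (0 < j \<and> (f ^^ j) x = x)"
    using exists_least_iff[of "\<lambda>p. 0 < p \<and> (f ^^ p) x = x"] assms by blast
  then show ?thesis using that by blast
qed

lemma bij_betw_least_period:
  assumes "bij_betw f D D" and "finite D" and "x \<in> D"
  obtains p where "0 < p" "(f ^^ p) x = x"
    "\<And>j. 0 < j \<Longrightarrow> j < p \<Longrightarrow> (f ^^ j) x \<noteq> x"
proof -
  define g where "g y = (if y \<in> D then f y else y)" for y
  have "bij_betw g D D"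
    using assms(1) by (rule bij_betw_cong[THEN iffD1, rotated]) (simp add: g_def)
  then have "g permutes D" by (rule bij_imp_permutes) (simp add: g_def)
  then obtain n where n: "0 < n" "(g ^^ n) x = x"
    using permutation_self permutation_permutes assms(2) by metis
  have fD: "f ` D \<subseteq> D" using bij_betw_imp_surj_on[OF assms(1)] by simp
  have "(g ^^ k) x = (f ^^ k) x" for k
    by (induct k) (use funpow_in_invariant[OF fD assms(3)] in \<open>auto simp: g_def\<close>)
  then show ?thesis using least_period[OF n(1)] n(2) that by metis
qed

lemma card_orbit_of_least_period:
  assumes "0 < p" "(f ^^ p) x = x" "\<And>j. 0 < j \<Longrightarrow> j < p \<Longrightarrow> (f ^^ j) x \<noteq> x"
  shows "card (orbit_of f x) = p"
proof -
  have "inj_on (\<lambda>k. (f ^^ k) x) {..<p}"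
    using inj_on_funpow_least[where f=f and n=p and s=x] assms(2,3) by (simp add: lessThan_atLeast0)
  then show ?thesis unfolding orbit_of_periodic[OF assms(1,2)] by (simp add: card_image)
qed

lemma orbit_of_sym:
  assumes "bij_betw f D D" "finite D" "x \<in> D" "y \<in> orbit_of f x"
  shows "x \<in> orbit_of f y"
proof -
  obtain p where p: "0 < p" "(f ^^ p) x = x" using bij_betw_least_period[OF assms(1-3)] by blast
  obtain n where y: "y = (f ^^ n) x" using assms(4) unfolding orbit_of_def by auto
  have "(f ^^ ((p - 1) * n)) y = (f ^^ ((p - 1) * n + n)) x" by (simp add: y funpow_add)
  also have "(p - 1) * n + n = p * n" using p(1) by (cases p) auto
  also have "(f ^^ (p * n)) x = x" using funpow_mod_eq[OF p(2), of "p * n"] by simp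
  finally show ?thesis using funpow_in_orbit_of[of "(p - 1) * n" f y] by simp
qed

lemma orbit_of_eq:
  assumes "bij_betw f D D" "finite D" "x \<in> D" "y \<in> orbit_of f x"
  shows "orbit_of f y = orbit_of f x"
  using orbit_of_trans[OF assms(4)] orbit_of_trans[OF orbit_of_sym[OF assms]] by blast

definition orbits :: "('b \<Rightarrow> 'b) \<Rightarrow> 'b set \<Rightarrow> 'b set set" where
  "orbits f D = {orbit_of f d | d. d \<in> D}"

lemma finite_orbits: "finite D \<Longrightarrow> finite (orbits f D)"
  unfolding orbits_def by simp

lemma card_orbits_split:
  assumes "bij_betw f D D" "finite D" "x \<in> D" "y \<in> D"
  shows "card (orbits f D)
    = card {Q \<in> orbits f D. x \<notin> Q \<and> y \<notin> Q} + card {orbit_of f x, orbit_of f y}"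
proof -
  have "orbits f D = {Q \<in> orbits f D. x \<notin> Q \<and> y \<notin> Q} \<union> {orbit_of f x, orbit_of f y}"
    using orbit_of_eq[OF assms(1,2)] assms(3,4) unfolding orbits_def by blast
  also have "card \<dots>
      = card {Q \<in> orbits f D. x \<notin> Q \<and> y \<notin> Q} + card {orbit_of f x, orbit_of f y}"
    by (rule card_Un_disjoint) (auto simp: orbit_of_self finite_orbits[OF assms(2)])
  finally show ?thesis .
qed

lemma orbit_of_comp_transpose_unaffected:
  assumes "x \<notin> orbit_of \<pi> w" "y \<notin> orbit_of \<pi> w"
  shows "orbit_of (\<pi> \<circ> transpose x y) w = orbit_of \<pi> w"
proof (rule orbit_of_cong[symmetric])
  fix v assume "v \<in> orbit_of \<pi> w"
  then have "v \<noteq> x" "v \<noteq> y" using assms by auto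
  then show "\<pi> v = (\<pi> \<circ> transpose x y) v" by simp
qed

lemma funpow_comp_eq_off:
  assumes "h y = x" "\<And>z. z \<notin> S \<Longrightarrow> h z = z"
    and "0 < k" "\<And>j. 0 < j \<Longrightarrow> j < k \<Longrightarrow> (f ^^ j) x \<notin> S"
  shows "((f \<circ> h) ^^ k) y = (f ^^ k) x"
proof -
  define g where "g = f \<circ> h"
  have g: "g z = f (h z)" for z unfolding g_def by simp
  have "(g ^^ i) y = (f ^^ i) x" if "0 < i" "i \<le> k" for i
    using that
  proof (induct i)
    case (Suc i)
    show ?case
    proof (cases "i = 0")
      case False
      then have "(g ^^ Suc i) y = g ((f ^^ i) x)" using Suc by simp
      also have "\<dots> = (f ^^ Suc i) x" using assms(2) assms(4)[of i] False Suc.prems by (simp add: g)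
      finally show ?thesis .
    qed (simp add: g assms(1))
  qed simp
  then show ?thesis using assms(3) unfolding g_def by simp
qed

lemma card_orbits_comp_transpose:
  assumes bij: "bij_betw \<pi> D D" and fin: "finite D" and xy: "x \<in> D" "y \<in> D"
  defines "\<pi>' \<equiv> \<pi> \<circ> transpose x y"
  shows "card (orbits \<pi>' D) + card {orbit_of \<pi> x, orbit_of \<pi> y}
       = card (orbits \<pi> D) + card {orbit_of \<pi>' x, orbit_of \<pi>' y}"
proof -
  have bij': "bij_betw \<pi>' D D" unfolding \<pi>'_def using xy by (intro bij_betw_trans[OF _ bij]) simp
  have undo: "\<pi>' \<circ> transpose x y = \<pi>" unfolding \<pi>'_def by (simp add: comp_assoc)
  have "orbit_of \<pi>' w = orbit_of \<pi> w" if "x \<notin> orbit_of \<pi> w" "y \<notin> orbit_of \<pi> w" for w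
    unfolding \<pi>'_def by (rule orbit_of_comp_transpose_unaffected[OF that])
  moreover have "orbit_of \<pi> w = orbit_of \<pi>' w"
    if "x \<notin> orbit_of \<pi>' w" "y \<notin> orbit_of \<pi>' w" for w
    using orbit_of_comp_transpose_unaffected[OF that] unfolding undo .
  ultimately have "{Q \<in> orbits \<pi>' D. x \<notin> Q \<and> y \<notin> Q}
      = {Q \<in> orbits \<pi> D. x \<notin> Q \<and> y \<notin> Q}"
    unfolding orbits_def by blast
  then show ?thesis
    using card_orbits_split[OF bij fin xy] card_orbits_split[OF bij' fin xy] by simp
qed

lemma card_orbits_transpose_split:
  assumes bij: "bij_betw \<pi> D D" and fin: "finite D" and xy: "x \<in> D" "y \<in> D" "x \<noteq> y"
    and y: "y \<in> orbit_of \<pi> x"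
  shows "card (orbits (\<pi> \<circ> transpose x y) D) = card (orbits \<pi> D) + 1"
proof -
  define \<pi>' where "\<pi>' = \<pi> \<circ> transpose x y"
  obtain p where p: "0 < p" "(\<pi> ^^ p) x = x"
    and pmin: "\<And>j. 0 < j \<Longrightarrow> j < p \<Longrightarrow> (\<pi> ^^ j) x \<noteq> x"
    using bij_betw_least_period[OF bij fin xy(1)] by blast
  have inj: "inj_on (\<lambda>k. (\<pi> ^^ k) x) {..<p}"
    using inj_on_funpow_least[where f=\<pi> and n=p and s=x] p(2) pmin by (simp add: lessThan_atLeast0)
  obtain s where s: "s < p" "y = (\<pi> ^^ s) x" using y unfolding orbit_of_periodic[OF p] by blast
  have ys: "(\<pi> ^^ k) y = (\<pi> ^^ (k + s)) x" for k by (simp add: s(2) funpow_add)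
  have fresh: "(\<pi> ^^ j) y \<notin> {x, y}" if "0 < j" "j < p - s" for j
  proof -
    have "(\<pi> ^^ (j + s)) x \<noteq> (\<pi> ^^ i) x" if "i < p" "i \<noteq> j + s" for i
      using inj that \<open>j < p - s\<close> unfolding inj_on_def by (metis lessThan_iff less_diff_conv)
    from this[of 0] this[of s] show ?thesis unfolding ys using s \<open>0 < j\<close> p(1) by auto
  qed
  have "(\<pi> ^^ (p - s)) y = x" using ys[of "p - s"] s(1) p(2) by simp
  have iter: "(\<pi>' ^^ k) x = (\<pi> ^^ k) y" if "0 < k" "k \<le> p - s" for k
    unfolding \<pi>'_def using that fresh by (intro funpow_comp_eq_off[where S = "{x, y}"]) auto
  then have "(\<pi>' ^^ (p - s)) x = x"
    using \<open>(\<pi> ^^ (p - s)) y = x\<close> s(1) by simp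
  then have orb: "orbit_of \<pi>' x = (\<lambda>k. (\<pi>' ^^ k) x) ` {..<p - s}"
    using s(1) by (intro orbit_of_periodic) simp_all
  have "y \<notin> orbit_of \<pi>' x"
  proof
    assume "y \<in> orbit_of \<pi>' x"
    then obtain k where k: "k < p - s" "y = (\<pi>' ^^ k) x" unfolding orb by blast
    with xy(3) have "0 < k" by (cases k) simp_all
    then have "(\<pi> ^^ (k + s)) x = (\<pi> ^^ s) x"
      using k s(2) iter[of k] unfolding ys by simp
    then show False using inj \<open>0 < k\<close> k(1) s(1) unfolding inj_on_def by fastforce
  qed
  then have "orbit_of \<pi>' x \<noteq> orbit_of \<pi>' y" using orbit_of_self[of y \<pi>'] by metis
  then have "card {orbit_of \<pi>' x, orbit_of \<pi>' y} = 2" by simp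
  moreover have "card {orbit_of \<pi> x, orbit_of \<pi> y} = 1" using orbit_of_eq[OF bij fin xy(1) y] by simp
  ultimately show ?thesis using card_orbits_comp_transpose[OF bij fin xy(1,2)] unfolding \<pi>'_def by simp
qed

lemma card_orbits_transpose_merge:
  assumes bij: "bij_betw \<pi> D D" and fin: "finite D" and xy: "x \<in> D" "y \<in> D"
    and y: "y \<notin> orbit_of \<pi> x"
  shows "card (orbits (\<pi> \<circ> transpose x y) D) + 1 = card (orbits \<pi> D)"
proof -
  define \<pi>' where "\<pi>' = \<pi> \<circ> transpose x y"
  have bij': "bij_betw \<pi>' D D" unfolding \<pi>'_def using xy by (intro bij_betw_trans[OF _ bij]) simp
  obtain p where p: "0 < p" "(\<pi> ^^ p) y = y"
    and pmin: "\<And>j. 0 < j \<Longrightarrow> j < p \<Longrightarrow> (\<pi> ^^ j) y \<noteq> y"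
    using bij_betw_least_period[OF bij fin xy(2)] by blast
  have x: "x \<notin> orbit_of \<pi> y" using orbit_of_sym[OF bij fin xy(2)] y by blast
  have "(\<pi>' ^^ p) x = (\<pi> ^^ p) y"
    unfolding \<pi>'_def using p pmin x funpow_in_orbit_of[of _ \<pi> y]
    by (intro funpow_comp_eq_off[where S = "{x, y}"]) auto
  then have "(\<pi>' ^^ p) x = y" using p(2) by simp
  then have "orbit_of \<pi>' y = orbit_of \<pi>' x"
    using orbit_of_eq[OF bij' fin xy(1)] funpow_in_orbit_of[of p \<pi>' x] by simp
  moreover have "orbit_of \<pi> x \<noteq> orbit_of \<pi> y" using y orbit_of_self[of y \<pi>] by auto
  ultimately show ?thesis using card_orbits_comp_transpose[OF bij fin xy] unfolding \<pi>'_def by simp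
qed

lemma orbits_disjoint:
  assumes "bij_betw f D D" "finite D" "Q1 \<in> orbits f D" "Q2 \<in> orbits f D" "Q1 \<noteq> Q2"
  shows "Q1 \<inter> Q2 = {}"
proof -
  obtain d1 d2 where d: "d1 \<in> D" "d2 \<in> D" "Q1 = orbit_of f d1" "Q2 = orbit_of f d2"
    using assms(3,4) unfolding orbits_def by blast
  show ?thesis
    using orbit_of_eq[OF assms(1,2) d(1)] orbit_of_eq[OF assms(1,2) d(2)] d(3,4) assms(5) by blast
qed

lemma sum_card_orbits_inter_le:
  assumes "bij_betw f D D" "finite D" "\<Q> \<subseteq> orbits f D" "finite X"
  shows "(\<Sum>Q\<in>\<Q>. card (Q \<inter> X)) \<le> card X"
proof -
  have "finite \<Q>" using finite_subset[OF assms(3) finite_orbits[OF assms(2)]] .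
  then have "(\<Sum>Q\<in>\<Q>. card (Q \<inter> X)) = card (\<Union>Q\<in>\<Q>. Q \<inter> X)"
    using orbits_disjoint[OF assms(1,2)] assms(3,4) by (intro card_UN_disjoint[symmetric]) blast+
  also have "\<dots> \<le> card X" using assms(4) by (intro card_mono) auto
  finally show ?thesis .
qed

lemma bij_betw_if_periodic:
  assumes "finite D" "f ` D \<subseteq> D" "\<And>d. d \<in> D \<Longrightarrow> \<exists>p>0. (f ^^ p) d = d"
  shows "bij_betw f D D"
proof -
  have "D \<subseteq> f ` D"
  proof
    fix d assume d: "d \<in> D"
    obtain p where "0 < p" "(f ^^ p) d = d" using assms(3)[OF d] by blast
    then have "d = (f ^^ Suc (p - 1)) d" by simp
    then have "d = f ((f ^^ (p - 1)) d)" by simp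
    moreover have "(f ^^ (p - 1)) d \<in> D" by (rule funpow_in_invariant[OF assms(2) d])
    ultimately show "d \<in> f ` D" by blast
  qed
  then have "f ` D = D" using assms(2) by blast
  then show ?thesis using eq_card_imp_inj_on[OF assms(1), of f] unfolding bij_betw_def by simp
qed

lemma ex_bij_betw_orbits_eq_fibres:
  assumes fin: "finite D"
  shows "\<exists>\<sigma>. bij_betw \<sigma> D D \<and> (\<forall>d\<in>D. orbit_of \<sigma> d = {d' \<in> D. c d' = c d})"
proof -
  define F where "F v = {d \<in> D. c d = v}" for v
  define k where "k v = card (F v)" for v
  have "\<forall>v. \<exists>h. bij_betw h {0..<k v} (F v)"
    using fin unfolding k_def F_def by (intro allI ex_bij_betw_nat_finite) simp
  then obtain E where E: "\<And>v. bij_betw (E v) {0..<k v} (F v)" by metis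
  define ix where "ix d = inv_into {0..<k (c d)} (E (c d)) d" for d
  define \<sigma> where "\<sigma> d = E (c d) ((ix d + 1) mod k (c d))" for d
  have EF: "E v j \<in> D" "c (E v j) = v" if "j < k v" for v j
    using bij_betw_apply[OF E, of j v] that unfolding F_def by auto
  have ixE: "ix (E v j) = j" if "j < k v" for v j
    using E[of v] that unfolding ix_def EF(2)[OF that] bij_betw_def by (simp add: inv_into_f_f)
  have dE: "d \<in> E (c d) ` {0..<k (c d)}" if "d \<in> D" for d
    using E[of "c d"] that unfolding bij_betw_def F_def by auto
  have ix: "ix d < k (c d)" "E (c d) (ix d) = d" if "d \<in> D" for d
    using inv_into_into[OF dE] f_inv_into_f[OF dE] that unfolding ix_def by auto
  have iter: "(\<sigma> ^^ n) d = E (c d) ((ix d + n) mod k (c d))" if d: "d \<in> D" for d n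
  proof (induct n)
    case (Suc n)
    define j where "j = (ix d + n) mod k (c d)"
    have j: "j < k (c d)" unfolding j_def using ix(1)[OF d] by simp
    have "(\<sigma> ^^ Suc n) d = \<sigma> (E (c d) j)" using Suc unfolding j_def by simp
    also have "\<dots> = E (c d) ((j + 1) mod k (c d))" by (simp add: \<sigma>_def EF(2)[OF j] ixE[OF j])
    finally have "(\<sigma> ^^ Suc n) d = E (c d) ((j + 1) mod k (c d))" .
    then show ?case unfolding j_def by (simp add: mod_Suc_eq)
  qed (use ix[OF d] in simp)
  have orbit: "orbit_of \<sigma> d = F (c d)" if d: "d \<in> D" for d
  proof
    show "orbit_of \<sigma> d \<subseteq> F (c d)"
      unfolding orbit_of_def F_def using iter[OF d] EF ix(1)[OF d] by auto
    show "F (c d) \<subseteq> orbit_of \<sigma> d"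
    proof
      fix d' assume "d' \<in> F (c d)"
      then obtain j where j: "j < k (c d)" "d' = E (c d) j"
        using E[of "c d"] unfolding bij_betw_def by (metis atLeastLessThan_iff imageE)
      have "(ix d + (j + k (c d) - ix d)) mod k (c d) = j" using ix(1)[OF d] j(1) by simp
      then have "(\<sigma> ^^ (j + k (c d) - ix d)) d = d'" using iter[OF d] j(2) by simp
      then show "d' \<in> orbit_of \<sigma> d" using funpow_in_orbit_of[of _ \<sigma> d] by metis
    qed
  qed
  have "\<sigma> d \<in> D" if "d \<in> D" for d
    using orbit[OF that] orbit_of_step[OF orbit_of_self[of d \<sigma>]] unfolding F_def by blast
  moreover have "(\<sigma> ^^ k (c d)) d = d" "0 < k (c d)" if "d \<in> D" for d
    using iter[OF that, of "k (c d)"] ix[OF that] by simp_all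
  ultimately have "bij_betw \<sigma> D D" using fin by (intro bij_betw_if_periodic) blast+
  then show ?thesis using orbit unfolding F_def by blast
qed

section \<open>First-return maps\<close>

definition return_time :: "('b \<Rightarrow> 'b) \<Rightarrow> 'b set \<Rightarrow> 'b \<Rightarrow> nat" where
  "return_time f S d = (LEAST k. 0 < k \<and> (f ^^ k) d \<in> S)"

definition first_return :: "('b \<Rightarrow> 'b) \<Rightarrow> 'b set \<Rightarrow> 'b \<Rightarrow> 'b" where
  "first_return f S d = (f ^^ return_time f S d) d"

lemma return_time_le: "0 < j \<Longrightarrow> (f ^^ j) d \<in> S \<Longrightarrow> return_time f S d \<le> j"
  unfolding return_time_def by (rule Least_le) simp

lemma not_in_before_return_time: "0 < j \<Longrightarrow> j < return_time f S d \<Longrightarrow> (f ^^ j) d \<notin> S"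
  unfolding return_time_def using not_less_Least by blast

lemma first_return_in_orbit_of: "first_return f S d \<in> orbit_of f d"
  unfolding first_return_def by (rule funpow_in_orbit_of)

context
  fixes f :: "'b \<Rightarrow> 'b" and D S :: "'b set"
  assumes bij: "bij_betw f D D" and fin: "finite D" and S: "S \<subseteq> D"
begin

lemma return_time_pos_first_return_mem:
  assumes "d \<in> S"
  shows "0 < return_time f S d" "first_return f S d \<in> S"
proof -
  obtain p where "0 < p" "(f ^^ p) d = d" using bij_betw_least_period[OF bij fin] assms S by blast
  then have "\<exists>k. 0 < k \<and> (f ^^ k) d \<in> S" using assms by auto
  from LeastI_ex[OF this] show "0 < return_time f S d" "first_return f S d \<in> S"
    unfolding return_time_def first_return_def by auto
qed

lemma funpow_in_orbit_of_first_return: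
  assumes "d \<in> S" "0 < j" "(f ^^ j) d \<in> S"
  shows "\<exists>i>0. (f ^^ j) d = (first_return f S ^^ i) d"
  using assms
proof (induct j arbitrary: d rule: less_induct)
  case (less j)
  define k where "k = return_time f S d"
  have k: "0 < k" "k \<le> j" unfolding k_def
    using return_time_pos_first_return_mem(1)[OF less(2)] return_time_le[OF less(3,4)] by auto
  show ?case
  proof (cases "k = j")
    case True
    then show ?thesis unfolding k_def first_return_def by (intro exI[of _ 1]) simp
  next
    case False
    have "(f ^^ j) d = (f ^^ (j - k)) (first_return f S d)"
      unfolding first_return_def k_def[symmetric] using k(2)
      by (metis funpow_add le_add_diff_inverse2 comp_apply)
    moreover obtain i where "0 < i"
      "(f ^^ (j - k)) (first_return f S d) = (first_return f S ^^ i) (first_return f S d)"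
      using less(1)[of "j - k" "first_return f S d"] return_time_pos_first_return_mem(2)[OF less(2)]
        k False less(4) calculation by auto
    ultimately show ?thesis by (intro exI[of _ "Suc i"]) (simp add: funpow_Suc_right del: funpow.simps)
  qed
qed

lemma orbit_of_first_return:
  assumes "d \<in> S"
  shows "orbit_of (first_return f S) d = orbit_of f d \<inter> S"
proof
  show "orbit_of (first_return f S) d \<subseteq> orbit_of f d \<inter> S"
  proof (rule orbit_of_subset)
    fix y assume y: "y \<in> orbit_of f d \<inter> S"
    then have "first_return f S y \<in> orbit_of f d"
      by (intro orbit_of_trans[OF _ first_return_in_orbit_of]) blast
    moreover have "first_return f S y \<in> S" using y return_time_pos_first_return_mem(2) by blast
    ultimately show "first_return f S y \<in> orbit_of f d \<inter> S" by blast
  qed (use assms orbit_of_self[of d f] in blast)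
  show "orbit_of f d \<inter> S \<subseteq> orbit_of (first_return f S) d"
  proof
    fix y assume "y \<in> orbit_of f d \<inter> S"
    then obtain j where "y = (f ^^ j) d" "y \<in> S" unfolding orbit_of_def by blast
    show "y \<in> orbit_of (first_return f S) d"
    proof (cases "j = 0")
      case True
      then show ?thesis using \<open>y = (f ^^ j) d\<close> orbit_of_self[of d] by simp
    next
      case False
      then obtain i where "y = (first_return f S ^^ i) d"
        using funpow_in_orbit_of_first_return[OF assms, of j] \<open>y = (f ^^ j) d\<close> \<open>y \<in> S\<close> by auto
      then show ?thesis using funpow_in_orbit_of by metis
    qed
  qed
qed

lemma first_return_periodic:
  assumes "d \<in> S"
  shows "\<exists>i>0. (first_return f S ^^ i) d = d"
proof -
  obtain p where "0 < p" "(f ^^ p) d = d" using bij_betw_least_period[OF bij fin] assms S by blast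
  then show ?thesis using funpow_in_orbit_of_first_return[OF assms, of p] assms by auto
qed

end

section \<open>Euler's formula for rotation systems\<close>

lemma flip_flip [simp]: "flip (flip d) = d"
  unfolding flip_def by simp

lemma fst_flip [simp]: "fst (flip d) = fst d"
  unfolding flip_def by simp

lemma snd_flip [simp]: "snd (flip d) = (\<not> snd d)"
  unfolding flip_def by simp

lemma darts_iff: "d \<in> darts A \<longleftrightarrow> fst (fst d) \<in> states A"
  unfolding darts_def edges_def by (cases d) (cases "fst d", auto)

lemma flip_in_darts [simp]: "flip d \<in> darts A \<longleftrightarrow> d \<in> darts A"
  unfolding darts_iff by simp

lemma finite_darts: "is_dfa A \<Longrightarrow> finite (darts (A :: 'a::finite dfa))"
  unfolding darts_def edges_def is_dfa_def by simp

lemma finite_edges: "is_dfa A \<Longrightarrow> finite (edges (A :: 'a::finite dfa))"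
  unfolding edges_def is_dfa_def by simp

lemma card_edges: "card (edges (A :: 'a::finite dfa)) = card (states A) * CARD('a)"
  unfolding edges_def by (simp add: card_cartesian_product)

lemma dart_vertex_simps [simp]:
  "dart_vertex A (e, True) = fst e" "dart_vertex A (e, False) = trans A (fst e) (snd e)"
  unfolding dart_vertex_def by simp_all

lemma joins_dart_vertex: "joins A (fst d) (dart_vertex A d) (dart_vertex A (flip d))"
  unfolding joins_def dart_vertex_def flip_def by auto

lemma dart_vertex_in_states: "is_dfa A \<Longrightarrow> d \<in> darts A \<Longrightarrow> dart_vertex A d \<in> states A"
  unfolding is_dfa_def dart_vertex_def darts_iff by auto

lemma rotation_system_bij: "rotation_system A \<sigma> \<Longrightarrow> bij_betw \<sigma> (darts A) (darts A)"
  unfolding rotation_system_def by simp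

lemma rotation_system_orbit:
  "rotation_system A \<sigma> \<Longrightarrow> d \<in> darts A \<Longrightarrow>
    orbit_of \<sigma> d = {d' \<in> darts A. dart_vertex A d' = dart_vertex A d}"
  unfolding rotation_system_def by blast

lemma rotation_system_dart_vertex:
  assumes "rotation_system A \<sigma>" "d \<in> darts A"
  shows "\<sigma> d \<in> darts A" "dart_vertex A (\<sigma> d) = dart_vertex A d"
  using orbit_of_step[OF orbit_of_self[of d \<sigma>]] rotation_system_orbit[OF assms] by auto

lemma rotation_system_exists: "is_dfa (A :: 'a::finite dfa) \<Longrightarrow> \<exists>\<sigma>. rotation_system A \<sigma>"
  unfolding rotation_system_def by (rule ex_bij_betw_orbits_eq_fibres[OF finite_darts])

definition flip_on :: "(nat \<times> 'a) set \<Rightarrow> 'a dart \<Rightarrow> 'a dart" where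
  "flip_on S d = (if fst d \<in> S then flip d else d)"

lemma flip_on_empty: "flip_on {} = id"
  unfolding flip_on_def by auto

lemma bij_betw_flip_on: "bij_betw (flip_on S) (darts A) (darts A)"
proof -
  have "flip_on S (flip_on S d) = d" for d unfolding flip_on_def by auto
  moreover have "flip_on S ` darts A \<subseteq> darts A" unfolding flip_on_def by auto
  ultimately show ?thesis by (intro bij_betw_byWitness[where f' = "flip_on S"]) auto
qed

lemma flip_on_insert:
  assumes "e \<notin> S"
  shows "flip_on (insert e S) = flip_on S \<circ> transpose (e, True) (e, False)"
proof
  fix d :: "'a dart"
  show "flip_on (insert e S) d = (flip_on S \<circ> transpose (e, True) (e, False)) d"
    using assms unfolding flip_on_def flip_def transpose_def by (cases d) auto
qed

lemma bij_betw_rotation_comp_flip_on: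
  "rotation_system A \<sigma> \<Longrightarrow> bij_betw (\<sigma> \<circ> flip_on S) (darts A) (darts A)"
  by (rule bij_betw_trans[OF bij_betw_flip_on rotation_system_bij])

definition edge_rel :: "'a dfa \<Rightarrow> (nat \<times> 'a) set \<Rightarrow> (nat \<times> nat) set" where
  "edge_rel A S = {(u, v). \<exists>e\<in>S. joins A e u v}"

definition num_components_on :: "'a dfa \<Rightarrow> (nat \<times> 'a) set \<Rightarrow> nat" where
  "num_components_on A S = card (states A // ((edge_rel A S)\<^sup>* \<inter> states A \<times> states A))"

lemma sym_edge_rel: "sym (edge_rel A S)"
  unfolding edge_rel_def joins_def sym_def by blast

lemma edge_rel_insert:
  "edge_rel A (insert e S)
    = edge_rel A S \<union> {(fst e, trans A (fst e) (snd e)), (trans A (fst e) (snd e), fst e)}"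
  unfolding edge_rel_def joins_def by auto

lemma num_components_on_edges: "num_components_on A (edges A) = num_components A"
  unfolding num_components_on_def num_components_def edge_rel_def adj_rel_def ..

lemma num_components_on_empty: "num_components_on A {} = card (states A)"
proof -
  have "states A // ((edge_rel A {})\<^sup>* \<inter> states A \<times> states A) = (\<lambda>a. {a}) ` states A"
    unfolding edge_rel_def quotient_def by auto
  then show ?thesis unfolding num_components_on_def by (simp add: card_image)
qed

lemma orbit_of_rotation_comp_flip_on_connected:
  assumes rot: "rotation_system A \<sigma>" and d: "d \<in> darts A"
    and w: "w \<in> orbit_of (\<sigma> \<circ> flip_on S) d"
  shows "(dart_vertex A d, dart_vertex A w) \<in> (edge_rel A S)\<^sup>*"
proof -
  have step: "(dart_vertex A x, dart_vertex A ((\<sigma> \<circ> flip_on S) x)) \<in> (edge_rel A S)\<^sup>*"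
    if x: "x \<in> darts A" for x
  proof -
    have "dart_vertex A ((\<sigma> \<circ> flip_on S) x) = dart_vertex A (flip_on S x)"
      using rotation_system_dart_vertex(2)[OF rot, of "flip_on S x"] x unfolding flip_on_def by simp
    moreover have "(dart_vertex A x, dart_vertex A (flip x)) \<in> edge_rel A S" if "fst x \<in> S"
      unfolding edge_rel_def using joins_dart_vertex[of A x] that by blast
    ultimately show ?thesis unfolding flip_on_def by auto
  qed
  have "orbit_of (\<sigma> \<circ> flip_on S) d \<subseteq> {w \<in> darts A. (dart_vertex A d, dart_vertex A w) \<in> (edge_rel A S)\<^sup>*}"
  proof (rule orbit_of_subset)
    fix y assume "y \<in> {w \<in> darts A. (dart_vertex A d, dart_vertex A w) \<in> (edge_rel A S)\<^sup>*}"
    then have "y \<in> darts A" "(dart_vertex A d, dart_vertex A y) \<in> (edge_rel A S)\<^sup>*" by auto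
    with step bij_betw_apply[OF bij_betw_rotation_comp_flip_on[OF rot]]
    show "(\<sigma> \<circ> flip_on S) y \<in> {w \<in> darts A. (dart_vertex A d, dart_vertex A w) \<in> (edge_rel A S)\<^sup>*}"
      by (blast intro: rtrancl_trans)
  qed (use d in simp)
  then show ?thesis using w by blast
qed

lemma card_orbits_rotation:
  assumes "is_dfa A" "rotation_system A \<sigma>"
  shows "card (orbits \<sigma> (darts A)) = card (states A)"
proof -
  define fibre where "fibre v = {d \<in> darts A. dart_vertex A d = v}" for v
  fix a :: 'a
  have out: "((v, a), True) \<in> fibre v" if "v \<in> states A" for v
    unfolding fibre_def darts_iff using that by simp
  have "orbits \<sigma> (darts A) = fibre ` states A"
  proof (intro set_eqI iffI)
    fix Q assume "Q \<in> orbits \<sigma> (darts A)"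
    then obtain d where "d \<in> darts A" "Q = orbit_of \<sigma> d" unfolding orbits_def by blast
    then show "Q \<in> fibre ` states A"
      using rotation_system_orbit[OF assms(2)] dart_vertex_in_states[OF assms(1)] unfolding fibre_def by blast
  next
    fix Q assume "Q \<in> fibre ` states A"
    then obtain v where v: "v \<in> states A" "Q = fibre v" by blast
    then have "Q = orbit_of \<sigma> ((v, a), True)"
      using rotation_system_orbit[OF assms(2)] out[OF v(1)] unfolding fibre_def by simp
    then show "Q \<in> orbits \<sigma> (darts A)" using out[OF v(1)] unfolding orbits_def fibre_def by blast
  qed
  moreover have "inj_on fibre (states A)"
  proof (rule inj_onI)
    fix v w assume "v \<in> states A" "fibre v = fibre w"
    then show "v = w" using out[of v] unfolding fibre_def by simp
  qed
  ultimately show ?thesis by (simp add: card_image)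
qed

lemma rtrancl_insert_sym_pair_cases:
  assumes sym: "sym r" and ab: "(a, b) \<in> (r \<union> {(u, v), (v, u)})\<^sup>*"
  shows "(a, b) \<in> r\<^sup>* \<or> (a, u) \<in> r\<^sup>* \<and> (v, b) \<in> r\<^sup>* \<or> (a, v) \<in> r\<^sup>* \<and> (u, b) \<in> r\<^sup>*"
  using ab
proof (induct rule: rtrancl_induct)
  case (step b c)
  have converse_path: "(y, x) \<in> r\<^sup>*" if "(x, y) \<in> r\<^sup>*" for x y
    using sym_rtrancl[OF sym] that unfolding sym_def by blast
  from step(2) consider "(b, c) \<in> r" | "b = u" "c = v" | "b = v" "c = u" by blast
  then show ?case
  proof cases
    case 1
    then show ?thesis using step(3) rtrancl_into_rtrancl[of _ b r c] by blast
  next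
    case 2
    then show ?thesis using step(3) converse_path rtrancl_trans[of a u r v] by blast
  next
    case 3
    then show ?thesis using step(3) converse_path rtrancl_trans[of a v r u] by blast
  qed
qed simp

lemma equiv_rtrancl_restrict: "sym r \<Longrightarrow> equiv V (r\<^sup>* \<inter> V \<times> V)"
  using sym_rtrancl[of r] unfolding equiv_def refl_on_def sym_def Relation.trans_def
  by (auto intro: rtrancl_trans)

lemma card_quotient_rtrancl_mono:
  assumes "sym r" "sym r'" "r \<subseteq> r'" "finite V"
  shows "card (V // (r'\<^sup>* \<inter> V \<times> V)) \<le> card (V // (r\<^sup>* \<inter> V \<times> V))"
proof -
  have eq: "equiv V (r\<^sup>* \<inter> V \<times> V)" "equiv V (r'\<^sup>* \<inter> V \<times> V)"
    using equiv_rtrancl_restrict assms(1,2) by blast+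
  have "r\<^sup>* \<inter> V \<times> V \<subseteq> r'\<^sup>* \<inter> V \<times> V" using rtrancl_mono[OF assms(3)] by blast
  from refines_equiv_image_eq[OF this eq] have "V // (r'\<^sup>* \<inter> V \<times> V)
      = (\<lambda>C. (r'\<^sup>* \<inter> V \<times> V) `` C) ` (V // (r\<^sup>* \<inter> V \<times> V))" ..
  then show ?thesis using card_image_le finite_quotient[OF assms(4) equiv_type[OF eq(1)]] by metis
qed

lemma card_quotient_insert_sym_pair:
  fixes r :: "('a \<times> 'a) set" and u v :: 'a
  assumes sym: "sym r" and fin: "finite V" and v: "v \<in> V"
  defines "r' \<equiv> r \<union> {(u, v), (v, u)}"
  shows "card (V // (r\<^sup>* \<inter> V \<times> V)) \<le> card (V // (r'\<^sup>* \<inter> V \<times> V)) + 1"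
proof -
  define R where "R = r\<^sup>* \<inter> V \<times> V"
  define R' where "R' = r'\<^sup>* \<inter> V \<times> V"
  have sym': "sym r'" using sym unfolding r'_def sym_def by blast
  have eqR: "equiv V R" unfolding R_def by (rule equiv_rtrancl_restrict[OF sym])
  have eqR': "equiv V R'" unfolding R'_def by (rule equiv_rtrancl_restrict[OF sym'])
  have "r\<^sup>* \<subseteq> r'\<^sup>*" unfolding r'_def by (rule rtrancl_mono) blast
  then have RR': "R \<subseteq> R'" unfolding R_def R'_def by blast
  define g where "g C = R' `` C" for C
  have img: "g ` (V // R) = V // R'"
    unfolding g_def by (rule refines_equiv_image_eq[OF RR' eqR eqR'])
  define Cv where "Cv = R `` {v}"
  have "inj_on g (V // R - {Cv})"
  proof (rule inj_onI)
    fix C1 C2 assume C1: "C1 \<in> V // R - {Cv}" and C2: "C2 \<in> V // R - {Cv}" and eq: "g C1 = g C2"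
    obtain a where a: "a \<in> V" "C1 = R `` {a}" using C1 by (auto elim: quotientE)
    obtain b where b: "b \<in> V" "C2 = R `` {b}" using C2 by (auto elim: quotientE)
    have far: "(c, v) \<notin> r\<^sup>*" "(v, c) \<notin> r\<^sup>*" if "c \<in> V" "R `` {c} \<noteq> Cv" for c
    proof -
      have "(v, c) \<notin> R" using that equiv_class_eq[OF eqR, of v c] unfolding Cv_def by auto
      then show "(v, c) \<notin> r\<^sup>*" using that(1) v unfolding R_def by blast
      then show "(c, v) \<notin> r\<^sup>*" using sym_rtrancl[OF sym] unfolding sym_def by blast
    qed
    have "g C1 = R' `` {a}" "g C2 = R' `` {b}"
      unfolding g_def a b using refines_equiv_class_eq2[OF RR' eqR eqR'] by simp_all
    then have "(a, b) \<in> r'\<^sup>*" using eq eq_equiv_class_iff[OF eqR' a(1) b(1)] unfolding R'_def by simp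
    then have "(a, b) \<in> r\<^sup>*"
      using rtrancl_insert_sym_pair_cases[OF sym] far[OF a(1)] far[OF b(1)] C1 C2 a(2) b(2)
      unfolding r'_def by blast
    then show "C1 = C2" using a b equiv_class_eq[OF eqR] unfolding R_def by simp
  qed
  then have "card (V // R - {Cv}) \<le> card (V // R')"
    using card_inj_on_le[of g "V // R - {Cv}" "V // R'"] img finite_quotient[OF fin equiv_type[OF eqR']]
    by blast
  moreover have "card (V // R) \<le> card (V // R - {Cv}) + 1"
    using finite_quotient[OF fin equiv_type[OF eqR]] card_Diff_singleton_if[of "V // R" Cv]
      card_gt_0_iff[of "V // R"] by auto
  ultimately show ?thesis unfolding R_def R'_def by linarith
qed

text \<open>The orbits of \<sigma> \<circ> flip_on S are the faces of the spanning subgraph with edge set S under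
  the rotation induced by \<sigma>.  Adding an edge changes the defect by exactly one, so going from no
  edges to all edges gives Euler's formula.\<close>

definition euler_defect ::
    "'a dfa \<Rightarrow> ('a dart \<Rightarrow> 'a dart) \<Rightarrow> (nat \<times> 'a) set \<Rightarrow> int" where
  "euler_defect A \<sigma> S =
     int (card (orbits (\<sigma> \<circ> flip_on S) (darts A))) - 2 * int (num_components_on A S)"

lemma euler_defect_insert:
  fixes A :: "'a::finite dfa"
  assumes dfa: "is_dfa A" and rot: "rotation_system A \<sigma>" and e: "e \<in> edges A" "e \<notin> S"
  shows "euler_defect A \<sigma> (insert e S) \<in> {euler_defect A \<sigma> S + 1, euler_defect A \<sigma> S - 1}"
proof -
  define \<pi> where "\<pi> = \<sigma> \<circ> flip_on S"
  define x y where "x = (e, True)" and "y = (e, False)"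
  define u v where "u = fst e" and "v = trans A (fst e) (snd e)"
  have xy: "x \<in> darts A" "y \<in> darts A" "x \<noteq> y" using e(1) unfolding x_def y_def darts_def by auto
  have bij: "bij_betw \<pi> (darts A) (darts A)"
    unfolding \<pi>_def by (rule bij_betw_rotation_comp_flip_on[OF rot])
  have fin: "finite (darts A)" by (rule finite_darts[OF dfa])
  have faces: "\<sigma> \<circ> flip_on (insert e S) = \<pi> \<circ> transpose x y"
    unfolding \<pi>_def x_def y_def flip_on_insert[OF e(2)] by (simp add: comp_assoc)
  have v: "v \<in> states A" using dfa e(1) unfolding is_dfa_def edges_def v_def by auto
  have finV: "finite (states A)" using dfa unfolding is_dfa_def by simp
  have rel: "edge_rel A (insert e S) = edge_rel A S \<union> {(u, v), (v, u)}"
    unfolding u_def v_def by (rule edge_rel_insert)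
  show ?thesis
  proof (cases "y \<in> orbit_of \<pi> x")
    case True
    have "(u, v) \<in> (edge_rel A S)\<^sup>*"
      using orbit_of_rotation_comp_flip_on_connected[OF rot xy(1) True[unfolded \<pi>_def]]
      unfolding x_def y_def u_def v_def by simp
    then have "(v, u) \<in> (edge_rel A S)\<^sup>*" using sym_rtrancl[OF sym_edge_rel] unfolding sym_def by blast
    with \<open>(u, v) \<in> (edge_rel A S)\<^sup>*\<close> have "(edge_rel A (insert e S))\<^sup>* = (edge_rel A S)\<^sup>*"
      unfolding rel by (intro rtrancl_subset) auto
    then have "num_components_on A (insert e S) = num_components_on A S"
      unfolding num_components_on_def by simp
    then show ?thesis
      using card_orbits_transpose_split[OF bij fin xy True] unfolding euler_defect_def faces \<pi>_def by simp
  next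
    case False
    have "edge_rel A S \<subseteq> edge_rel A (insert e S)" unfolding edge_rel_def by blast
    then have "num_components_on A (insert e S) \<le> num_components_on A S"
      unfolding num_components_on_def by (rule card_quotient_rtrancl_mono[OF sym_edge_rel sym_edge_rel _ finV])
    moreover have "num_components_on A S \<le> num_components_on A (insert e S) + 1"
      unfolding num_components_on_def rel by (rule card_quotient_insert_sym_pair[OF sym_edge_rel finV v])
    ultimately consider "num_components_on A S = num_components_on A (insert e S)"
      | "num_components_on A S = num_components_on A (insert e S) + 1" by linarith
    then show ?thesis
      using card_orbits_transpose_merge[OF bij fin xy(1,2) False]
      unfolding euler_defect_def faces \<pi>_def by cases auto
  qed
qed

lemma euler_defect_union:
  fixes A :: "'a::finite dfa"
  assumes dfa: "is_dfa A" and rot: "rotation_system A \<sigma>"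
    and X: "finite X" "X \<subseteq> edges A" "X \<inter> S = {}"
  shows "\<exists>j. euler_defect A \<sigma> (S \<union> X) = euler_defect A \<sigma> S + int (card X) - 2 * int j"
  using X
proof (induct X rule: finite_induct)
  case empty
  then show ?case by (intro exI[of _ 0]) simp
next
  case (insert e X)
  then obtain j
    where j: "euler_defect A \<sigma> (S \<union> X) = euler_defect A \<sigma> S + int (card X) - 2 * int j"
    by auto
  have "euler_defect A \<sigma> (insert e (S \<union> X))
      \<in> {euler_defect A \<sigma> (S \<union> X) + 1, euler_defect A \<sigma> (S \<union> X) - 1}"
    using insert by (intro euler_defect_insert[OF dfa rot]) auto
  then show ?case
    using j insert(1,2) by (auto intro: exI[of _ j] exI[of _ "Suc j"])
qed

lemma euler_defect_empty:
  assumes "is_dfa A" "rotation_system A \<sigma>"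
  shows "euler_defect A \<sigma> {} = - int (card (states A))"
  unfolding euler_defect_def flip_on_empty num_components_on_empty
  using card_orbits_rotation[OF assms] by simp

lemma euler_defect_edges:
  assumes "rotation_system A \<sigma>"
  shows "euler_defect A \<sigma> (edges A) = int (num_faces A \<sigma>) - 2 * int (num_components A)"
proof -
  have "orbit_of (\<sigma> \<circ> flip_on (edges A)) d = orbit_of (\<sigma> \<circ> flip) d" if "d \<in> darts A" for d
  proof (rule orbit_of_cong)
    fix d' assume "d' \<in> orbit_of (\<sigma> \<circ> flip_on (edges A)) d"
    then have "d' \<in> darts A"
      using orbit_of_subset[of d "darts A"] that
        bij_betw_apply[OF bij_betw_rotation_comp_flip_on[OF assms, of "edges A"]] by blast
    then show "(\<sigma> \<circ> flip_on (edges A)) d' = (\<sigma> \<circ> flip) d'" unfolding flip_on_def darts_def by auto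
  qed
  then have "orbits (\<sigma> \<circ> flip_on (edges A)) (darts A) = {orbit_of (\<sigma> \<circ> flip) d | d. d \<in> darts A}"
    unfolding orbits_def by blast
  then show ?thesis unfolding euler_defect_def num_faces_def num_components_on_edges by simp
qed

theorem euler_formula:
  fixes A :: "'a::finite dfa"
  assumes "is_dfa A" "rotation_system A \<sigma>"
  shows "\<exists>g. int (card (states A)) - int (card (edges A)) + int (num_faces A \<sigma>)
    = 2 * int (num_components A) - 2 * int g"
proof -
  obtain j where "euler_defect A \<sigma> ({} \<union> edges A)
      = euler_defect A \<sigma> {} + int (card (edges A)) - 2 * int j"
    using euler_defect_union[OF assms finite_edges[OF assms(1)], of "{}"] by blast
  then have "int (num_faces A \<sigma>) - 2 * int (num_components A)
      = - int (card (states A)) + int (card (edges A)) - 2 * int j"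
    using euler_defect_empty[OF assms] euler_defect_edges[OF assms(2)] by simp
  then show ?thesis by (intro exI[of _ j]) linarith
qed

lemma dfa_genus_euler:
  fixes A :: "'a::finite dfa"
  assumes "is_dfa A"
  obtains \<sigma> where "rotation_system A \<sigma>"
    "int (card (states A)) - int (card (edges A)) + int (num_faces A \<sigma>)
      = 2 * int (num_components A) - 2 * int (dfa_genus A)"
proof -
  obtain \<sigma> where "rotation_system A \<sigma>" using rotation_system_exists[OF assms] by blast
  then have "\<exists>g \<sigma>. rotation_system A \<sigma> \<and> int (card (states A)) - int (card (edges A)) + int (num_faces A \<sigma>)
      = 2 * int (num_components A) - 2 * int g"
    using euler_formula[OF assms] by blast
  from LeastI_ex[OF this] show ?thesis using that unfolding dfa_genus_def by blast
qed

section \<open>Minimal automata\<close>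

definition reachable :: "'a dfa \<Rightarrow> nat set" where
  "reachable A = {foldl (trans A) (init A) w | w. True}"

lemma foldl_trans_in_states: "is_dfa A \<Longrightarrow> q \<in> states A \<Longrightarrow> foldl (trans A) q w \<in> states A"
  by (induct w arbitrary: q) (auto simp: is_dfa_def)

lemma reachable_subset_states: "is_dfa A \<Longrightarrow> reachable A \<subseteq> states A"
  unfolding reachable_def using foldl_trans_in_states is_dfa_def by blast

lemma foldl_trans_reachable: "foldl (trans A) (init A) w \<in> reachable A"
  unfolding reachable_def by blast

lemma init_reachable: "init A \<in> reachable A"
  using foldl_trans_reachable[of A "[]"] by simp

lemma trans_reachable: "q \<in> reachable A \<Longrightarrow> trans A q a \<in> reachable A"
  unfolding reachable_def by (auto intro: exI[of _ "w @ [a]" for w])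

lemma card_states_minimal_le_reachable:
  assumes "minimal_dfa A L" "is_dfa B" "lang B = L"
  shows "card (states A) \<le> card (reachable B)"
proof -
  define B' where "B' = B\<lparr>states := reachable B, final := final B \<inter> reachable B\<rparr>"
  have "is_dfa B'"
    using assms(2) reachable_subset_states[OF assms(2)] init_reachable[of B] trans_reachable[of _ B]
    unfolding is_dfa_def B'_def by (auto intro: finite_subset)
  moreover have "lang B' = L"
    using assms(3) foldl_trans_reachable[of B] unfolding lang_def B'_def by auto
  ultimately show ?thesis using assms(1) unfolding minimal_dfa_def B'_def by auto
qed

lemma minimal_dfa_states_reachable:
  assumes "minimal_dfa A L"
  shows "states A = reachable A"
proof -
  have dfa: "is_dfa A" "lang A = L" using assms unfolding minimal_dfa_def by auto
  then have "finite (states A)" unfolding is_dfa_def by simp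
  then show ?thesis
    using card_states_minimal_le_reachable[OF assms dfa] reachable_subset_states[OF dfa(1)]
    by (metis card_seteq)
qed

lemma minimal_dfa_distinguishable:
  assumes min: "minimal_dfa A L" and pq: "p \<in> states A" "q \<in> states A" "p \<noteq> q"
  obtains v where "(foldl (trans A) p v \<in> final A) \<noteq> (foldl (trans A) q v \<in> final A)"
proof (rule ccontr)
  assume "\<not> thesis"
  then have same: "(foldl (trans A) p v \<in> final A) = (foldl (trans A) q v \<in> final A)" for v
    using that by blast
  have dfa: "is_dfa A" using min unfolding minimal_dfa_def by simp
  \<comment> \<open>merging q into p gives a smaller DFA for L\<close>
  define g where "g r = (if r = q then p else r)" for r
  define A' where "A' = A\<lparr>states := states A - {q}, init := g (init A), final := final A - {q},
    trans := \<lambda>r a. g (trans A r a)\<rparr>"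
  have g: "g r \<in> states A - {q}" if "r \<in> states A" for r using that pq unfolding g_def by auto
  have "is_dfa A'" using dfa g unfolding is_dfa_def A'_def by auto
  have "(foldl (trans A') (g r) w \<in> final A') = (foldl (trans A) r w \<in> final A)"
    if "r \<in> states A" for r w
    using that
  proof (induct w arbitrary: r)
    case Nil
    then show ?case using same[of "[]"] g[OF Nil] unfolding A'_def g_def by auto
  next
    case (Cons a w)
    have "trans A (g r) a \<in> states A" using dfa g[OF Cons(2)] unfolding is_dfa_def by blast
    then have "(foldl (trans A') (g r) (a # w) \<in> final A') = (foldl (trans A) (g r) (a # w) \<in> final A)"
      using Cons(1) unfolding A'_def by simp
    also have "\<dots> = (foldl (trans A) r (a # w) \<in> final A)" using same[of "a # w"] unfolding g_def by simp
    finally show ?case .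
  qed
  then have "lang A' = L"
    using min dfa unfolding minimal_dfa_def lang_def is_dfa_def by (simp add: A'_def)
  then have "card (states A) \<le> card (states A - {q})"
    using min \<open>is_dfa A'\<close> unfolding minimal_dfa_def A'_def by auto
  moreover have "finite (states A)" using dfa unfolding is_dfa_def by simp
  ultimately show False using card_Diff1_less[OF _ pq(2)] by fastforce
qed

text \<open>Well defined on the reachable states of any DFA B for L, since words leading to the same
  state of B cannot be distinguished by L (foldl_minimal_eqI).\<close>

definition to_minimal :: "'a dfa \<Rightarrow> 'a dfa \<Rightarrow> nat \<Rightarrow> nat" where
  "to_minimal A B q = foldl (trans A) (init A) (SOME w. foldl (trans B) (init B) w = q)"

lemma foldl_minimal_eqI:
  assumes min: "minimal_dfa A L" and B: "lang B = L"
    and eq: "foldl (trans B) (init B) w1 = foldl (trans B) (init B) w2"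
  shows "foldl (trans A) (init A) w1 = foldl (trans A) (init A) w2"
proof (rule ccontr)
  assume ne: "foldl (trans A) (init A) w1 \<noteq> foldl (trans A) (init A) w2"
  have dfa: "is_dfa A" and lA: "lang A = L" using min unfolding minimal_dfa_def by simp_all
  have "init A \<in> states A" using dfa unfolding is_dfa_def by simp
  then obtain v where v: "(foldl (trans A) (foldl (trans A) (init A) w1) v \<in> final A) \<noteq>
      (foldl (trans A) (foldl (trans A) (init A) w2) v \<in> final A)"
    using minimal_dfa_distinguishable[OF min foldl_trans_in_states[OF dfa] foldl_trans_in_states[OF dfa] ne]
    by blast
  have "(w1 @ v \<in> L) = (w2 @ v \<in> L)" using B eq unfolding lang_def by auto
  moreover have "(w1 @ v \<in> L) \<noteq> (w2 @ v \<in> L)" using v lA unfolding lang_def by auto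
  ultimately show False by simp
qed

context
  fixes A B :: "'a dfa" and L :: "'a list set"
  assumes min: "minimal_dfa A L" and B: "lang B = L"
begin

lemma to_minimal_foldl: "to_minimal A B (foldl (trans B) (init B) w) = foldl (trans A) (init A) w"
  unfolding to_minimal_def by (rule foldl_minimal_eqI[OF min B someI[of _ w]]) simp

lemma to_minimal_trans:
  "q \<in> reachable B \<Longrightarrow> to_minimal A B (trans B q a) = trans A (to_minimal A B q) a"
  unfolding reachable_def using to_minimal_foldl[of "w @ [a]" for w] to_minimal_foldl by auto

lemma to_minimal_in_states: "q \<in> reachable B \<Longrightarrow> to_minimal A B q \<in> states A"
  using min minimal_dfa_states_reachable[OF min] to_minimal_foldl foldl_trans_reachable
  unfolding reachable_def by auto

lemma to_minimal_surj:
  assumes "u \<in> states A"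
  obtains q where "q \<in> reachable B" "to_minimal A B q = u"
proof -
  obtain w where "u = foldl (trans A) (init A) w"
    using assms minimal_dfa_states_reachable[OF min] unfolding reachable_def by blast
  then show ?thesis using that[OF foldl_trans_reachable] to_minimal_foldl[of w] by blast
qed

end

text \<open>Transition tables on the states {..<N}, padded with 0: every DFA with at most N states is a
  renumbering of one of these.\<close>

definition bounded_tables :: "nat \<Rightarrow> (nat \<times> 'a \<Rightarrow> nat) set" where
  "bounded_tables N = {t. \<forall>x.
     (x \<in> {..<N} \<times> UNIV \<longrightarrow> t x \<in> {..<N}) \<and> (x \<notin> {..<N} \<times> UNIV \<longrightarrow> t x = 0)}"

lemma finite_bounded_tables: "finite (bounded_tables N :: (nat \<times> 'a::finite \<Rightarrow> nat) set)"
  unfolding bounded_tables_def by (rule finite_set_of_finite_funs) simp_all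

lemma lang_eq_renumbered:
  assumes A: "is_dfa A" "card (states A) \<le> N"
  obtains i F t where "i < N" "F \<subseteq> {..<N}" "t \<in> bounded_tables N"
    "lang A = {w. foldl (curry t) i w \<in> F}"
proof -
  define k where "k = card (states A)"
  have "finite (states A)" using A unfolding is_dfa_def by simp
  then obtain f where f: "bij_betw f (states A) {0..<k}" using ex_bij_betw_finite_nat k_def by blast
  define t where "t = (\<lambda>(q, a). if q < k then f (trans A (inv_into (states A) f q) a) else 0)"
  have fk: "f p < k" if "p \<in> states A" for p using bij_betw_apply[OF f that] by simp
  have trA: "trans A p a \<in> states A" if "p \<in> states A" for p a using A(1) that unfolding is_dfa_def by blast
  have fold: "foldl (curry t) (f p) w = f (foldl (trans A) p w)" if "p \<in> states A" for p w
    using that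
  proof (induct w arbitrary: p)
    case (Cons a w)
    have "curry t (f p) a = f (trans A p a)"
      using fk[OF Cons(2)] bij_betw_inv_into_left[OF f Cons(2)] unfolding t_def by simp
    then show ?case using Cons(1)[OF trA[OF Cons(2)]] by simp
  qed simp
  have init: "init A \<in> states A" and final: "final A \<subseteq> states A" using A(1) unfolding is_dfa_def by auto
  have "lang A = {w. foldl (curry t) (f (init A)) w \<in> f ` final A}"
  proof (rule set_eqI)
    fix w
    have "foldl (trans A) (init A) w \<in> states A" by (rule foldl_trans_in_states[OF A(1) init])
    then show "w \<in> lang A \<longleftrightarrow> w \<in> {w. foldl (curry t) (f (init A)) w \<in> f ` final A}"
      unfolding lang_def fold[OF init] using inj_on_image_mem_iff[OF bij_betw_imp_inj_on[OF f] _ final]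
      by simp
  qed
  moreover have "f (init A) < N" "f ` final A \<subseteq> {..<N}"
    using fk init final A(2) unfolding k_def by (auto intro: order_less_le_trans)
  moreover have "t \<in> bounded_tables N"
  proof -
    have "inv_into (states A) f q \<in> states A" if "q < k" for q
      using inv_into_into[of q f "states A"] bij_betw_imp_surj_on[OF f] that by auto
    then have lt: "t (q, a) < k" if "q < k" for q a using fk trA that unfolding t_def by simp
    have zero: "t (q, a) = 0" if "\<not> q < k" for q a using that unfolding t_def by simp
    show ?thesis unfolding bounded_tables_def
    proof (intro CollectI allI conjI impI)
      fix x :: "nat \<times> 'a"
      obtain q a where x: "x = (q, a)" by (cases x)
      show "t x \<in> {..<N}" if "x \<in> {..<N} \<times> UNIV"
        using that lt[of q a] zero[of q a] A(2) unfolding x k_def by (cases "q < card (states A)") auto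
      show "t x = 0" if "x \<notin> {..<N} \<times> UNIV"
        using that zero[of q a] A(2) unfolding x k_def by simp
    qed
  qed
  ultimately show ?thesis using that by blast
qed

lemma finite_langs_card_states_le:
  "finite {lang A | A :: 'a::finite dfa. is_dfa A \<and> card (states A) \<le> N}"
proof (rule finite_subset)
  show "{lang A | A :: 'a dfa. is_dfa A \<and> card (states A) \<le> N}
    \<subseteq> (\<lambda>(i, F, t). {w. foldl (curry t) i w \<in> F}) ` ({..<N} \<times> Pow {..<N} \<times> bounded_tables N)"
  proof
    fix L assume "L \<in> {lang A | A :: 'a dfa. is_dfa A \<and> card (states A) \<le> N}"
    then obtain A :: "'a dfa" where "is_dfa A" "card (states A) \<le> N" "L = lang A" by blast
    then obtain i F t where "i < N" "F \<subseteq> {..<N}" "t \<in> bounded_tables N"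
      "L = {w. foldl (curry t) i w \<in> F}"
      using lang_eq_renumbered by metis
    then show "L \<in> (\<lambda>(i, F, t). {w. foldl (curry t) i w \<in> F}) ` ({..<N} \<times> Pow {..<N} \<times> bounded_tables N)"
      by (intro image_eqI[where x = "(i, F, t)"]) simp_all
  qed
qed (simp add: finite_bounded_tables)

section \<open>Closed dart walks and short cycles\<close>

definition dart_follows :: "'a dfa \<Rightarrow> 'a dart \<Rightarrow> 'a dart \<Rightarrow> bool" where
  "dart_follows A D D' \<longleftrightarrow> dart_vertex A D' = dart_vertex A (flip D)"

lemma has_simple_cycle_of_closed_walk:
  assumes k: "length Ds = k" "1 \<le> k" and darts: "set Ds \<subseteq> darts A"
    and walk: "\<And>i. i < k \<Longrightarrow> dart_follows A (Ds ! i) (Ds ! ((i + 1) mod k))"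
    and distinct: "distinct (map fst Ds)"
  shows "has_simple_cycle A k"
proof -
  define vs where "vs = map (dart_vertex A) Ds @ [dart_vertex A (Ds ! 0)]"
  define es where "es = map fst Ds"
  have vs: "vs ! i = dart_vertex A (Ds ! (i mod k))" if "i \<le> k" for i
    using that k unfolding vs_def by (cases "i = k") (simp_all add: nth_append)
  have "joins A (es ! i) (vs ! i) (vs ! Suc i)" if "i < k" for i
    using joins_dart_vertex[of A "Ds ! i"] walk[OF that] vs[of i] vs[of "Suc i"] that k
    unfolding es_def dart_follows_def by (simp add: mod_Suc_eq)
  moreover have "set es \<subseteq> edges A" using darts unfolding es_def darts_def by auto
  ultimately show ?thesis
    using k distinct vs[of 0] vs[of k] unfolding has_simple_cycle_def es_def vs_def
    by (intro conjI exI[of _ vs] exI[of _ es]) (auto simp: vs_def es_def)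
qed

lemma same_edge_darts: "fst D' = fst D \<Longrightarrow> D' = D \<or> D' = flip D"
  unfolding flip_def by (cases D', cases D) auto

lemma not_dart_follows_self:
  assumes "\<not> has_simple_cycle A 1" "D \<in> darts A"
  shows "\<not> dart_follows A D D"
  using has_simple_cycle_of_closed_walk[of "[D]" 1 A] assms by auto

lemma closed_walk2_backtracks:
  assumes "\<not> has_simple_cycle A 1" "\<not> has_simple_cycle A 2" "D0 \<in> darts A" "D1 \<in> darts A"
    and "dart_follows A D0 D1" "dart_follows A D1 D0"
  shows "D1 = flip D0"
proof (cases "fst D1 = fst D0")
  case True
  then show ?thesis using same_edge_darts not_dart_follows_self assms by metis
next
  case False
  have "has_simple_cycle A 2"
    by (rule has_simple_cycle_of_closed_walk[of "[D0, D1]"])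
      (use assms False in \<open>auto simp: less_Suc_eq numeral_2_eq_2\<close>)
  then show ?thesis using assms(2) by blast
qed

lemma distinct_edges_of_follows:
  assumes "\<not> has_simple_cycle A 1" "D \<in> darts A" "dart_follows A D D'" "D' \<noteq> flip D"
  shows "fst D' \<noteq> fst D"
  using same_edge_darts[of D' D] not_dart_follows_self[OF assms(1,2)] assms(3,4) by blast

lemma no_closed_walk3:
  assumes no_cycle: "\<not> has_simple_cycle A 1" "\<not> has_simple_cycle A 2" "\<not> has_simple_cycle A 3"
    and D: "D0 \<in> darts A" "D1 \<in> darts A" "D2 \<in> darts A"
    and walk: "dart_follows A D0 D1" "dart_follows A D1 D2" "dart_follows A D2 D0"
  shows False
proof -
  have no_backtrack: "Y \<noteq> flip X" if "Z \<in> darts A"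
    "dart_follows A X Y" "dart_follows A Y Z" "dart_follows A Z X" for X Y Z
    using that not_dart_follows_self[OF no_cycle(1) that(1)] unfolding dart_follows_def by auto
  note edge = distinct_edges_of_follows[OF no_cycle(1)]
  have "fst D1 \<noteq> fst D0" "fst D2 \<noteq> fst D1" "fst D0 \<noteq> fst D2"
    using edge[OF D(1) walk(1) no_backtrack[OF D(3) walk]]
      edge[OF D(2) walk(2) no_backtrack[OF D(1) walk(2,3,1)]]
      edge[OF D(3) walk(3) no_backtrack[OF D(2) walk(3,1,2)]] by simp_all
  then have "distinct (map fst [D0, D1, D2])" by (simp add: not_sym)
  then have "has_simple_cycle A 3"
  proof (rule has_simple_cycle_of_closed_walk[of "[D0, D1, D2]", rotated 4])
    fix i :: nat assume "i < 3"
    then consider "i = 0" | "i = 1" | "i = 2" by linarith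
    then show "dart_follows A ([D0, D1, D2] ! i) ([D0, D1, D2] ! ((i + 1) mod 3))"
      by cases (simp_all add: walk)
  qed (use D in simp_all)
  then show False using no_cycle(3) by blast
qed

lemma closed_walk4_backtrack_opposite:
  assumes no_cycle: "\<not> has_simple_cycle A 1" "\<not> has_simple_cycle A 2"
    and D: "D2 \<in> darts A" "D3 \<in> darts A"
    and walk: "dart_follows A D1 D2" "dart_follows A D2 D3" "dart_follows A D3 D0"
    and backtrack: "D1 = flip D0"
  shows "D3 = flip D2"
  using closed_walk2_backtracks[OF no_cycle D walk(2)] walk(1,3) backtrack
  unfolding dart_follows_def by simp

lemma closed_walk4_backtracks:
  assumes no_cycle: "\<not> has_simple_cycle A 1" "\<not> has_simple_cycle A 2" "\<not> has_simple_cycle A 4"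
    and D: "D0 \<in> darts A" "D1 \<in> darts A" "D2 \<in> darts A" "D3 \<in> darts A"
    and walk: "dart_follows A D0 D1" "dart_follows A D1 D2" "dart_follows A D2 D3" "dart_follows A D3 D0"
  shows "D1 = flip D0 \<or> D2 = flip D1 \<or> D3 = flip D2 \<or> D0 = flip D3"
proof (rule ccontr)
  assume "\<not> ?thesis"
  then have b: "D1 \<noteq> flip D0" "D2 \<noteq> flip D1" "D3 \<noteq> flip D2" "D0 \<noteq> flip D3" by auto
  have opposite: "fst Z \<noteq> fst X" if "X \<in> darts A" "Y \<in> darts A" "Y \<noteq> flip X"
    "dart_follows A X Y" "dart_follows A Y Z" for X Y Z
  proof
    assume "fst Z = fst X"
    then consider "Z = X" | "Z = flip X" using same_edge_darts by blast
    then show False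
    proof cases
      case 1
      then show False using closed_walk2_backtracks[OF no_cycle(1,2) that(1,2,4)] that(3,5) by simp
    next
      case 2
      then show False
        using not_dart_follows_self[OF no_cycle(1) that(2)] that(4,5) unfolding dart_follows_def by simp
    qed
  qed
  note edge = distinct_edges_of_follows[OF no_cycle(1)]
  have "fst D1 \<noteq> fst D0" "fst D2 \<noteq> fst D1" "fst D3 \<noteq> fst D2" "fst D0 \<noteq> fst D3"
    "fst D2 \<noteq> fst D0" "fst D3 \<noteq> fst D1"
    using edge[OF D(1) walk(1) b(1)] edge[OF D(2) walk(2) b(2)] edge[OF D(3) walk(3) b(3)]
      edge[OF D(4) walk(4) b(4)] opposite[OF D(1,2) b(1) walk(1,2)] opposite[OF D(2,3) b(2) walk(2,3)]
    by simp_all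
  then have "distinct (map fst [D0, D1, D2, D3])" by (simp add: not_sym)
  then have "has_simple_cycle A 4"
  proof (rule has_simple_cycle_of_closed_walk[of "[D0, D1, D2, D3]", rotated 4])
    fix i :: nat assume "i < 4"
    then consider "i = 0" | "i = 1" | "i = 2" | "i = 3" by linarith
    then show "dart_follows A ([D0, D1, D2, D3] ! i) ([D0, D1, D2, D3] ! ((i + 1) mod 4))"
      by cases (simp_all add: walk)
  qed (use D in simp_all)
  then show False using no_cycle(3) by blast
qed

section \<open>Faces through the reachable part of an automaton\<close>

locale dfa_embedding_over_minimal =
  fixes A B :: "'a::finite dfa" and L :: "'a list set"
    and \<sigma> :: "'a dart \<Rightarrow> 'a dart"
  assumes min: "minimal_dfa A L" and dfaB: "is_dfa B" and langB: "lang B = L"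
    and rot: "rotation_system B \<sigma>" and two_letters: "2 \<le> CARD('a)"
begin

abbreviation R :: "nat set" where "R \<equiv> reachable B"

definition reach_edges :: "(nat \<times> 'a) set" where
  "reach_edges = R \<times> UNIV"

definition reach_darts :: "'a dart set" where
  "reach_darts = {d. fst d \<in> reach_edges}"

definition unreachable :: "nat set" where
  "unreachable = states B - R"

definition reach_face_perm :: "'a dart \<Rightarrow> 'a dart" where
  "reach_face_perm = \<sigma> \<circ> flip_on reach_edges"

definition vertex_succ :: "'a dart \<Rightarrow> 'a dart" where
  "vertex_succ = first_return \<sigma> reach_darts"

definition face_succ :: "'a dart \<Rightarrow> 'a dart" where
  "face_succ = first_return reach_face_perm reach_darts"

lemma finite_states_B: "finite (states B)"
  using dfaB unfolding is_dfa_def by simp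

lemma finite_darts_B: "finite (darts B)"
  by (rule finite_darts[OF dfaB])

lemma reach_darts_subset: "reach_darts \<subseteq> darts B"
  using reachable_subset_states[OF dfaB] unfolding reach_darts_def reach_edges_def by (auto simp: darts_iff)

lemma finite_reach_darts: "finite reach_darts"
  using finite_subset[OF reach_darts_subset finite_darts_B] .

lemma flip_in_reach_darts [simp]: "flip d \<in> reach_darts \<longleftrightarrow> d \<in> reach_darts"
  unfolding reach_darts_def by simp

lemma reach_darts_iff: "d \<in> reach_darts \<longleftrightarrow> fst (fst d) \<in> R"
  unfolding reach_darts_def reach_edges_def by (simp add: mem_Times_iff)

lemma dart_vertex_reachable: "d \<in> reach_darts \<Longrightarrow> dart_vertex B d \<in> R"
  unfolding reach_darts_iff dart_vertex_def using trans_reachable by auto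

lemma out_dart_in_reach_darts: "v \<in> R \<Longrightarrow> ((v, a), True) \<in> reach_darts"
  unfolding reach_darts_iff by simp

lemma card_reach_darts: "card reach_darts = 2 * CARD('a) * card R"
proof -
  have "reach_darts = (R \<times> UNIV) \<times> (UNIV :: bool set)"
    unfolding reach_darts_def reach_edges_def by auto
  then show ?thesis by (simp add: card_cartesian_product)
qed

lemma ex_two_letters: "\<exists>a1 a2 :: 'a. a1 \<noteq> a2"
  using two_letters card_le_Suc0_iff_eq[of "UNIV :: 'a set"] by auto

lemma bij_reach_face_perm: "bij_betw reach_face_perm (darts B) (darts B)"
  unfolding reach_face_perm_def by (rule bij_betw_rotation_comp_flip_on[OF rot])

lemma bij_sigma: "bij_betw \<sigma> (darts B) (darts B)"
  by (rule rotation_system_bij[OF rot])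

lemma orbit_of_vertex_succ:
  assumes d: "d \<in> reach_darts"
  shows "orbit_of vertex_succ d = {d' \<in> reach_darts. dart_vertex B d' = dart_vertex B d}"
proof -
  have "orbit_of vertex_succ d = orbit_of \<sigma> d \<inter> reach_darts"
    unfolding vertex_succ_def by (rule orbit_of_first_return[OF bij_sigma finite_darts_B reach_darts_subset d])
  also have "\<dots> = {d' \<in> reach_darts. dart_vertex B d' = dart_vertex B d}"
    using rotation_system_orbit[OF rot, of d] d reach_darts_subset by blast
  finally show ?thesis .
qed

lemma vertex_succ:
  assumes "d \<in> reach_darts"
  shows "vertex_succ d \<in> reach_darts" "dart_vertex B (vertex_succ d) = dart_vertex B d"
  using orbit_of_vertex_succ[OF assms] orbit_of_step[OF orbit_of_self[of d vertex_succ]] by auto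

lemma vertex_succ_neq:
  assumes d: "d \<in> reach_darts"
  shows "vertex_succ d \<noteq> d"
proof
  assume "vertex_succ d = d"
  then have "orbit_of vertex_succ d = {d}" using orbit_of_periodic[of 1 vertex_succ d] by (simp add: lessThan_Suc)
  moreover obtain a1 a2 :: 'a where "a1 \<noteq> a2" using ex_two_letters by blast
  moreover have "((dart_vertex B d, a), True) \<in> orbit_of vertex_succ d" for a
    using orbit_of_vertex_succ[OF d] out_dart_in_reach_darts[OF dart_vertex_reachable[OF d]] by simp
  ultimately show False by (metis prod.inject singletonD)
qed

text \<open>At a reachable dart reach_face_perm crosses the edge and rotates, at any other dart it only
  rotates; so its first return to the reachable darts is: cross the edge, then rotate to the next
  reachable dart.\<close>

lemma face_succ_eq_vertex_succ_flip:
  assumes d: "d \<in> reach_darts"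
  shows "face_succ d = vertex_succ (flip d)"
proof -
  define k where "k = return_time \<sigma> reach_darts (flip d)"
  have k: "0 < k" "(\<sigma> ^^ k) (flip d) \<in> reach_darts"
    using return_time_pos_first_return_mem[OF bij_sigma finite_darts_B reach_darts_subset, of "flip d"] d
    unfolding k_def first_return_def by auto
  have iter: "(reach_face_perm ^^ t) d = (\<sigma> ^^ t) (flip d)" if "0 < t" "t \<le> k" for t
    unfolding reach_face_perm_def using that not_in_before_return_time[of _ \<sigma> reach_darts "flip d"] d
    by (intro funpow_comp_eq_off[where S = reach_darts]) (auto simp: flip_on_def reach_darts_def k_def)
  have "return_time reach_face_perm reach_darts d = k"
    unfolding return_time_def
  proof (rule Least_equality)
    show "0 < k \<and> (reach_face_perm ^^ k) d \<in> reach_darts" using k iter[of k] by simp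
    show "k \<le> j" if "0 < j \<and> (reach_face_perm ^^ j) d \<in> reach_darts" for j
    proof (rule ccontr)
      assume "\<not> k \<le> j"
      then show False
        using that iter[of j] not_in_before_return_time[of j \<sigma> reach_darts "flip d"] unfolding k_def
        by simp
    qed
  qed
  then show ?thesis
    unfolding face_succ_def vertex_succ_def first_return_def using iter[of k] k(1) k_def by simp
qed

lemma face_succ:
  assumes "d \<in> reach_darts"
  shows "face_succ d \<in> reach_darts" "dart_vertex B (face_succ d) = dart_vertex B (flip d)"
    "face_succ d \<noteq> flip d"
  unfolding face_succ_eq_vertex_succ_flip[OF assms]
  using vertex_succ[of "flip d"] vertex_succ_neq[of "flip d"] assms by auto

lemma orbit_of_face_succ:
  "d \<in> reach_darts \<Longrightarrow> orbit_of face_succ d = orbit_of reach_face_perm d \<inter> reach_darts"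
  unfolding face_succ_def
  by (rule orbit_of_first_return[OF bij_reach_face_perm finite_darts_B reach_darts_subset])

lemma face_succ_least_period:
  assumes "d \<in> reach_darts"
  obtains p where "0 < p" "(face_succ ^^ p) d = d"
    "\<And>j. 0 < j \<Longrightarrow> j < p \<Longrightarrow> (face_succ ^^ j) d \<noteq> d" "card (orbit_of face_succ d) = p"
proof -
  obtain i where "0 < i" "(face_succ ^^ i) d = d"
    using first_return_periodic[OF bij_reach_face_perm finite_darts_B reach_darts_subset assms]
    unfolding face_succ_def by blast
  then show ?thesis using least_period card_orbit_of_least_period that by metis
qed

lemma funpow_face_succ_in_reach_darts: "d \<in> reach_darts \<Longrightarrow> (face_succ ^^ j) d \<in> reach_darts"
  by (induct j) (simp_all add: face_succ(1))

definition reach_faces :: "'a dart set set" where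
  "reach_faces = {Q \<in> orbits reach_face_perm (darts B). Q \<inter> reach_darts \<noteq> {}}"

lemma orbit_of_reach_face_perm_avoiding_reach_darts:
  assumes d: "d \<in> darts B" and Q: "orbit_of reach_face_perm d \<inter> reach_darts = {}"
  shows "dart_vertex B d \<in> unreachable"
    "orbit_of reach_face_perm d = {d' \<in> darts B. dart_vertex B d' = dart_vertex B d}"
proof -
  have "orbit_of reach_face_perm d = orbit_of \<sigma> d"
  proof (rule orbit_of_cong)
    fix y assume "y \<in> orbit_of reach_face_perm d"
    then have "y \<notin> reach_darts" using Q by blast
    then show "reach_face_perm y = \<sigma> y" unfolding reach_face_perm_def flip_on_def reach_darts_def by simp
  qed
  then show orbit: "orbit_of reach_face_perm d = {d' \<in> darts B. dart_vertex B d' = dart_vertex B d}"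
    using rotation_system_orbit[OF rot d] by simp
  have "dart_vertex B d \<notin> R"
  proof
    assume "dart_vertex B d \<in> R"
    then have "((dart_vertex B d, a), True) \<in> orbit_of reach_face_perm d \<inter> reach_darts" for a
      using out_dart_in_reach_darts reach_darts_subset unfolding orbit by auto
    then show False using Q by blast
  qed
  then show "dart_vertex B d \<in> unreachable"
    using dart_vertex_in_states[OF dfaB d] unfolding unreachable_def by simp
qed

lemma card_orbits_reach_face_perm_le:
  "card (orbits reach_face_perm (darts B)) \<le> card unreachable + card reach_faces"
proof -
  define fibre where "fibre u = {d' \<in> darts B. dart_vertex B d' = u}" for u
  have "orbits reach_face_perm (darts B) \<subseteq> reach_faces \<union> fibre ` unreachable"
    using orbit_of_reach_face_perm_avoiding_reach_darts unfolding orbits_def reach_faces_def fibre_def by blast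
  moreover have "finite unreachable" using finite_states_B unfolding unreachable_def by simp
  ultimately have "card (orbits reach_face_perm (darts B)) \<le> card (reach_faces \<union> fibre ` unreachable)"
    using finite_orbits[OF finite_darts_B, of reach_face_perm] unfolding reach_faces_def
    by (intro card_mono) auto
  also have "\<dots> \<le> card reach_faces + card (fibre ` unreachable)" by (rule card_Un_le)
  also have "\<dots> \<le> card reach_faces + card unreachable"
    using card_image_le[OF \<open>finite unreachable\<close>] by simp
  finally show ?thesis by simp
qed

lemma num_components_reach_edges: "card unreachable + 1 \<le> num_components_on B reach_edges"
proof -
  define Rel where "Rel = (edge_rel B reach_edges)\<^sup>* \<inter> states B \<times> states B"
  have init: "init B \<in> states B" "init B \<in> R" using dfaB init_reachable unfolding is_dfa_def by auto
  have edge: "u \<in> R \<and> w \<in> R" if "(u, w) \<in> edge_rel B reach_edges" for u w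
    using that trans_reachable unfolding edge_rel_def reach_edges_def joins_def by auto
  have isolated: "(u, w) \<in> (edge_rel B reach_edges)\<^sup>* \<Longrightarrow> u = w \<or> u \<in> R \<and> w \<in> R" for u w
    by (induct rule: rtrancl_induct) (use edge in auto)
  have "inj_on (\<lambda>x. Rel `` {x}) (insert (init B) unreachable)"
  proof (rule inj_onI)
    fix x y assume x: "x \<in> insert (init B) unreachable" and y: "y \<in> insert (init B) unreachable"
      and eq: "Rel `` {x} = Rel `` {y}"
    have "x \<in> states B" "y \<in> states B" using x y init unfolding unreachable_def by auto
    then have "(x, y) \<in> Rel"
      using eq eq_equiv_class_iff[OF equiv_rtrancl_restrict[OF sym_edge_rel]] unfolding Rel_def by blast
    then show "x = y" using isolated[of x y] x y unfolding Rel_def unreachable_def by auto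
  qed
  moreover have "(\<lambda>x. Rel `` {x}) ` insert (init B) unreachable \<subseteq> states B // Rel"
    using init unfolding unreachable_def by (auto intro: quotientI)
  moreover have "finite (states B // Rel)"
    unfolding Rel_def by (rule finite_quotient[OF finite_states_B]) blast
  ultimately have "card (insert (init B) unreachable) \<le> num_components_on B reach_edges"
    unfolding num_components_on_def Rel_def[symmetric] by (rule card_inj_on_le)
  moreover have "card (insert (init B) unreachable) = card unreachable + 1"
    using init finite_states_B unfolding unreachable_def by simp
  ultimately show ?thesis by simp
qed

lemma genus_lower_bound:
  assumes euler: "int (card (states B)) - int (card (edges B)) + int (num_faces B \<sigma>)
    = 2 * int (num_components B) - 2 * int g"
  shows "2 + (int CARD('a) - 1) * int (card R) - int (card reach_faces) \<le> 2 * int g"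
proof -
  define X where "X = edges B - reach_edges"
  have X: "X = unreachable \<times> UNIV" "reach_edges \<union> X = edges B"
    using reachable_subset_states[OF dfaB]
    unfolding X_def unreachable_def edges_def reach_edges_def by auto
  obtain j where "euler_defect B \<sigma> (reach_edges \<union> X)
      = euler_defect B \<sigma> reach_edges + int (card X) - 2 * int j"
    using euler_defect_union[OF dfaB rot, of X reach_edges] finite_edges[OF dfaB] unfolding X_def by auto
  then have "int (num_faces B \<sigma>) - 2 * int (num_components B)
    \<le> int (card (orbits reach_face_perm (darts B))) - 2 * int (num_components_on B reach_edges)
      + int (card unreachable) * int CARD('a)"
    unfolding X(2) euler_defect_edges[OF rot] unfolding X(1) euler_defect_def reach_face_perm_def
    by (simp add: card_cartesian_product)
  moreover have "card (states B) = card R + card unreachable"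
    using reachable_subset_states[OF dfaB] finite_states_B unfolding unreachable_def
    by (simp add: card_Diff_subset card_mono finite_subset)
  ultimately show ?thesis
    using euler card_orbits_reach_face_perm_le num_components_reach_edges card_edges[of B]
    by (simp add: algebra_simps)
qed

definition image_dart :: "'a dart \<Rightarrow> 'a dart" where
  "image_dart d = ((to_minimal A B (fst (fst d)), snd (fst d)), snd d)"

lemma image_dart_in_darts: "d \<in> reach_darts \<Longrightarrow> image_dart d \<in> darts A"
  unfolding image_dart_def darts_iff reach_darts_iff by (simp add: to_minimal_in_states[OF min langB])

lemma image_dart_flip: "image_dart (flip d) = flip (image_dart d)"
  unfolding image_dart_def flip_def by simp

lemma dart_vertex_image_dart:
  "d \<in> reach_darts \<Longrightarrow> dart_vertex A (image_dart d) = to_minimal A B (dart_vertex B d)"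
  unfolding image_dart_def dart_vertex_def reach_darts_iff by (simp add: to_minimal_trans[OF min langB])

lemma dart_follows_image_face_succ:
  assumes "d \<in> reach_darts"
  shows "dart_follows A (image_dart d) (image_dart (face_succ d))"
  using dart_vertex_image_dart[of "face_succ d"] dart_vertex_image_dart[of "flip d"] face_succ[OF assms] assms
  unfolding dart_follows_def image_dart_flip by simp

text \<open>A backtrack of the image walk can only go from an outgoing to an incoming dart: otherwise
  the two darts would be the same dart of B.\<close>

lemma backtrack_out_in:
  assumes d: "d \<in> reach_darts" and backtrack: "image_dart (face_succ d) = flip (image_dart d)"
  shows "snd d \<and> \<not> snd (face_succ d)"
proof -
  define e where "e = face_succ d"
  have e: "dart_vertex B e = dart_vertex B (flip d)" "e \<noteq> flip d" using face_succ[OF d] unfolding e_def by auto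
  have same: "snd (fst e) = snd (fst d)" "snd e = (\<not> snd d)"
    using backtrack unfolding e_def[symmetric] image_dart_def flip_def by auto
  have "fst (fst e) \<noteq> fst (fst d)"
  proof
    assume "fst (fst e) = fst (fst d)"
    then have "e = flip d" using same unfolding flip_def by (cases e, cases d) auto
    then show False using e(2) by simp
  qed
  then show ?thesis using e(1) same unfolding e_def[symmetric] dart_vertex_def by (cases "snd d") auto
qed

lemma image_face_walk:
  "d \<in> reach_darts \<Longrightarrow>
    dart_follows A (image_dart ((face_succ ^^ i) d)) (image_dart ((face_succ ^^ Suc i) d))"
  using dart_follows_image_face_succ[OF funpow_face_succ_in_reach_darts] by simp

lemma face_length_ge3:
  assumes no_cycle: "\<not> has_simple_cycle A 1" "\<not> has_simple_cycle A 2" and d: "d \<in> reach_darts"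
  shows "3 \<le> card (orbit_of face_succ d)"
proof -
  obtain p where p: "0 < p" "(face_succ ^^ p) d = d" "card (orbit_of face_succ d) = p"
    using face_succ_least_period[OF d] by metis
  define d1 where "d1 = face_succ d"
  have d1: "d1 \<in> reach_darts" unfolding d1_def by (rule face_succ(1)[OF d])
  have "p \<noteq> 1"
  proof
    assume "p = 1"
    then have "dart_follows A (image_dart d) (image_dart d)"
      using dart_follows_image_face_succ[OF d] p(2) by simp
    then show False using not_dart_follows_self[OF no_cycle(1) image_dart_in_darts[OF d]] by simp
  qed
  moreover have "p \<noteq> 2"
  proof
    assume "p = 2"
    then have return: "face_succ d1 = d" using p(2) unfolding d1_def by (simp add: numeral_2_eq_2)
    have "image_dart d1 = flip (image_dart d)"
      using closed_walk2_backtracks[OF no_cycle image_dart_in_darts[OF d] image_dart_in_darts[OF d1]]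
        dart_follows_image_face_succ[OF d] dart_follows_image_face_succ[OF d1]
      unfolding d1_def[symmetric] return by simp
    then show False
      using backtrack_out_in[OF d] backtrack_out_in[OF d1] return unfolding d1_def by auto
  qed
  ultimately show ?thesis using p by linarith
qed

lemma face_length_ge4:
  assumes no_cycle: "\<not> has_simple_cycle A 1" "\<not> has_simple_cycle A 2" "\<not> has_simple_cycle A 3"
    and d: "d \<in> reach_darts"
  shows "4 \<le> card (orbit_of face_succ d)"
proof -
  obtain p where p: "(face_succ ^^ p) d = d" "card (orbit_of face_succ d) = p"
    using face_succ_least_period[OF d] by metis
  have "p \<noteq> 3"
  proof
    assume "p = 3"
    then have "dart_follows A (image_dart ((face_succ ^^ 2) d)) (image_dart d)"
      using image_face_walk[OF d, of 2] p(1) by (simp add: numeral_3_eq_3)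
    moreover have "image_dart d \<in> darts A" "image_dart (face_succ d) \<in> darts A"
      "image_dart (face_succ (face_succ d)) \<in> darts A"
      using image_dart_in_darts face_succ(1) d by simp_all
    ultimately show False
      using no_closed_walk3[OF no_cycle, of "image_dart d" "image_dart ((face_succ ^^ 1) d)"
          "image_dart ((face_succ ^^ 2) d)"] image_face_walk[OF d, of 0] image_face_walk[OF d, of 1]
      by (simp add: numeral_2_eq_2)
  qed
  then show ?thesis using face_length_ge3[OF no_cycle(1,2) d] p(2) by linarith
qed

definition backtracking :: "'a dart set" where
  "backtracking = {x \<in> reach_darts. image_dart (face_succ x) = flip (image_dart x)}"

lemma face_length4_backtracking:
  assumes no_cycle: "\<not> has_simple_cycle A 1" "\<not> has_simple_cycle A 2" "\<not> has_simple_cycle A 4"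
    and d: "d \<in> reach_darts" and len: "card (orbit_of face_succ d) = 4"
  shows "2 \<le> card (orbit_of face_succ d \<inter> backtracking)"
proof -
  obtain p where p: "(face_succ ^^ p) d = d"
    "\<And>j. 0 < j \<Longrightarrow> j < p \<Longrightarrow> (face_succ ^^ j) d \<noteq> d" "card (orbit_of face_succ d) = p"
    using face_succ_least_period[OF d] by metis
  define d1 d2 d3 where "d1 = face_succ d" and "d2 = face_succ d1" and "d3 = face_succ d2"
  have rd: "d1 \<in> reach_darts" "d2 \<in> reach_darts" "d3 \<in> reach_darts"
    unfolding d1_def d2_def d3_def using face_succ(1) d by simp_all
  have succ: "face_succ d = d1" "face_succ d1 = d2" "face_succ d2 = d3"
    unfolding d1_def d2_def d3_def by simp_all
  have return: "face_succ d3 = d" using p(1) len p(3) unfolding d1_def d2_def d3_def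
    by (simp add: eval_nat_numeral)
  have d2_neq: "d2 \<noteq> d" using p(2)[of 2] len p(3) unfolding d1_def d2_def by (simp add: eval_nat_numeral)
  have orbit: "d \<in> orbit_of face_succ d" "d1 \<in> orbit_of face_succ d" "d2 \<in> orbit_of face_succ d"
    "d3 \<in> orbit_of face_succ d"
    unfolding d1_def d2_def d3_def by (auto intro: orbit_of_step orbit_of_self)
  note H = image_dart_in_darts[OF d] image_dart_in_darts[OF rd(1)] image_dart_in_darts[OF rd(2)]
    image_dart_in_darts[OF rd(3)]
  note walk = dart_follows_image_face_succ[OF d, folded d1_def]
    dart_follows_image_face_succ[OF rd(1), folded d2_def] dart_follows_image_face_succ[OF rd(2), folded d3_def]
    dart_follows_image_face_succ[OF rd(3), unfolded return]
  note opposite = closed_walk4_backtrack_opposite[OF no_cycle(1,2)]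
  have "image_dart d1 = flip (image_dart d) \<and> image_dart d3 = flip (image_dart d2)
    \<or> image_dart d2 = flip (image_dart d1) \<and> image_dart d = flip (image_dart d3)"
    using closed_walk4_backtracks[OF no_cycle H walk] opposite[OF H(3,4) walk(2,3,4)]
      opposite[OF H(4,1) walk(3,4,1)] opposite[OF H(1,2) walk(4,1,2)] opposite[OF H(2,3) walk(1,2,3)]
    by blast
  then obtain x y where "x \<noteq> y"
    "x \<in> orbit_of face_succ d \<inter> backtracking" "y \<in> orbit_of face_succ d \<inter> backtracking"
  proof
    assume "image_dart d1 = flip (image_dart d) \<and> image_dart d3 = flip (image_dart d2)"
    then have "d \<in> backtracking" "d2 \<in> backtracking"
      unfolding backtracking_def using d rd succ by auto
    then show ?thesis using that[of d2 d] d2_neq orbit by blast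
  next
    assume "image_dart d2 = flip (image_dart d1) \<and> image_dart d = flip (image_dart d3)"
    then have "d1 \<in> backtracking" "d3 \<in> backtracking"
      unfolding backtracking_def using rd succ return by auto
    moreover have "d1 \<noteq> d3" using d2_neq return unfolding d2_def by auto
    ultimately show ?thesis using that[of d1 d3] orbit by blast
  qed
  moreover have "finite (orbit_of face_succ d \<inter> backtracking)"
    using finite_reach_darts unfolding backtracking_def by auto
  ultimately show ?thesis using card_mono[of _ "{x, y}"] by fastforce
qed

definition collapsing :: "'a dart \<Rightarrow> bool" where
  "collapsing b \<longleftrightarrow> image_dart (vertex_succ b) = image_dart b"

definition vertex_image :: "'a dart \<Rightarrow> nat \<times> 'a dart" where
  "vertex_image b = (dart_vertex B b, image_dart b)"

lemma card_backtracking: "card backtracking = card {b \<in> reach_darts. collapsing b}"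
proof -
  have "backtracking = flip ` {b \<in> reach_darts. collapsing b}"
    unfolding backtracking_def collapsing_def
    by (auto simp: face_succ_eq_vertex_succ_flip image_dart_flip intro: image_eqI[of _ flip "flip x" for x])
  moreover have "inj_on flip {b \<in> reach_darts. collapsing b}" by (rule inj_onI) (metis flip_flip)
  ultimately show ?thesis by (simp add: card_image)
qed

text \<open>Every fibre of the vertex image contains a non-collapsing dart: if all darts of a fibre
  collapsed, the fibre would be closed under rotation to the next reachable dart and so contain
  two outgoing darts with different letters, which have different images.\<close>

lemma vertex_image_non_collapsing:
  assumes b0: "b0 \<in> reach_darts"
  shows "\<exists>b\<in>reach_darts. vertex_image b = vertex_image b0 \<and> \<not> collapsing b"
proof (rule ccontr)
  define G where "G = {b \<in> reach_darts. vertex_image b = vertex_image b0}"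
  assume "\<not> ?thesis"
  then have "vertex_succ b \<in> G" if "b \<in> G" for b
    using that vertex_succ unfolding G_def collapsing_def vertex_image_def by auto
  then have "orbit_of vertex_succ b0 \<subseteq> G" using b0 unfolding G_def by (intro orbit_of_subset) auto
  moreover obtain a1 a2 :: 'a where "a1 \<noteq> a2" using ex_two_letters by blast
  moreover have "((dart_vertex B b0, a), True) \<in> orbit_of vertex_succ b0" for a
    using orbit_of_vertex_succ[OF b0] out_dart_in_reach_darts[OF dart_vertex_reachable[OF b0]] by simp
  ultimately have "image_dart ((dart_vertex B b0, a), True) = image_dart b0" for a
    unfolding G_def vertex_image_def by blast
  then have "a = snd (fst b0)" for a unfolding image_dart_def by simp
  then show False using \<open>a1 \<noteq> a2\<close> by metis
qed

lemma card_vertex_image_collapsing: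
  "card (vertex_image ` reach_darts) + card {b \<in> reach_darts. collapsing b} \<le> card reach_darts"
proof -
  define rep where "rep g = (SOME b. b \<in> reach_darts \<and> vertex_image b = g \<and> \<not> collapsing b)" for g
  have rep: "rep g \<in> reach_darts \<and> vertex_image (rep g) = g \<and> \<not> collapsing (rep g)"
    if g: "g \<in> vertex_image ` reach_darts" for g
  proof -
    obtain b0 where "b0 \<in> reach_darts" "g = vertex_image b0" using g by blast
    then have "\<exists>b. b \<in> reach_darts \<and> vertex_image b = g \<and> \<not> collapsing b"
      using vertex_image_non_collapsing by blast
    then show ?thesis unfolding rep_def by (rule someI_ex)
  qed
  then have "inj_on rep (vertex_image ` reach_darts)" by (metis inj_onI)
  moreover have "rep ` vertex_image ` reach_darts \<subseteq> {b \<in> reach_darts. \<not> collapsing b}"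
    using rep by blast
  ultimately have "card (vertex_image ` reach_darts) \<le> card {b \<in> reach_darts. \<not> collapsing b}"
    using finite_reach_darts by (intro card_inj_on_le) auto
  moreover have "card {b \<in> reach_darts. \<not> collapsing b} + card {b \<in> reach_darts. collapsing b}
      = card reach_darts"
  proof -
    have "reach_darts = {b \<in> reach_darts. \<not> collapsing b} \<union> {b \<in> reach_darts. collapsing b}" by blast
    then show ?thesis using finite_reach_darts by (metis (no_types, lifting) card_Un_disjoint
        disjoint_iff finite_Un mem_Collect_eq)
  qed
  ultimately show ?thesis by linarith
qed

lemma card_vertex_image_ge:
  "CARD('a) * card R + CARD('a) * card (states A) \<le> card (vertex_image ` reach_darts)"
proof -
  define Out In where "Out = {b \<in> reach_darts. snd b}" and "In = {b \<in> reach_darts. \<not> snd b}"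
  have fin: "finite Out" "finite In" unfolding Out_def In_def using finite_reach_darts by simp_all
  have "Out = (\<lambda>e. (e, True)) ` (R \<times> UNIV)"
    unfolding Out_def reach_darts_iff by (auto intro: image_eqI[of _ _ "fst b" for b])
  then have "card Out = CARD('a) * card R" by (simp add: card_image inj_on_def card_cartesian_product)
  moreover have "inj_on vertex_image Out"
    unfolding Out_def vertex_image_def image_dart_def dart_vertex_def by (rule inj_onI) auto
  ultimately have out: "card (vertex_image ` Out) = CARD('a) * card R" by (simp add: card_image)
  have "{D \<in> darts A. \<not> snd D} \<subseteq> image_dart ` In"
  proof
    fix D assume D: "D \<in> {D \<in> darts A. \<not> snd D}"
    obtain u a b where D_eq: "D = ((u, a), b)" by (metis prod.collapse)
    then have u: "D = ((u, a), False)" "u \<in> states A" using D by (auto simp: darts_iff)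
    obtain q where "q \<in> R" "to_minimal A B q = u" using to_minimal_surj[OF min langB u(2)] by blast
    then have "((q, a), False) \<in> In" "image_dart ((q, a), False) = D"
      unfolding In_def reach_darts_iff image_dart_def u by simp_all
    then show "D \<in> image_dart ` In" using image_eqI[of D image_dart "((q, a), False)" In] by simp
  qed
  then have "card {D \<in> darts A. \<not> snd D} \<le> card (image_dart ` In)"
    using fin(2) by (intro card_mono) simp_all
  moreover have "{D \<in> darts A. \<not> snd D} = (\<lambda>e. (e, False)) ` (states A \<times> UNIV)"
    unfolding darts_iff by (auto intro: image_eqI[of _ _ "fst D" for D])
  then have "card {D \<in> darts A. \<not> snd D} = CARD('a) * card (states A)"
    by (simp add: card_image inj_on_def card_cartesian_product)
  moreover have "image_dart ` In = snd ` vertex_image ` In"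
    unfolding vertex_image_def by (simp add: image_image)
  moreover have "card (snd ` vertex_image ` In) \<le> card (vertex_image ` In)"
    using fin(2) by (intro card_image_le) simp
  ultimately have in_: "CARD('a) * card (states A) \<le> card (vertex_image ` In)" by simp
  have "vertex_image ` Out \<inter> vertex_image ` In = {}"
    unfolding Out_def In_def vertex_image_def image_dart_def by auto
  then have "card (vertex_image ` Out) + card (vertex_image ` In)
      = card (vertex_image ` Out \<union> vertex_image ` In)"
    using fin by (simp add: card_Un_disjoint)
  also have "\<dots> \<le> card (vertex_image ` reach_darts)"
    using finite_reach_darts unfolding Out_def In_def by (intro card_mono) auto
  finally show ?thesis using out in_ by simp
qed

lemma reach_face_eq_orbit_of:
  assumes "Q \<in> reach_faces"
  obtains d where "d \<in> reach_darts" "Q = orbit_of reach_face_perm d"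
proof -
  obtain d0 d where "d0 \<in> darts B" "Q = orbit_of reach_face_perm d0" "d \<in> Q" "d \<in> reach_darts"
    using assms unfolding reach_faces_def orbits_def by blast
  then show ?thesis using orbit_of_eq[OF bij_reach_face_perm finite_darts_B] that by metis
qed

lemma sum_reach_faces_le:
  "X \<subseteq> reach_darts \<Longrightarrow> (\<Sum>Q\<in>reach_faces. card (Q \<inter> X)) \<le> card X"
  using finite_subset[OF _ finite_reach_darts]
  by (intro sum_card_orbits_inter_le[OF bij_reach_face_perm finite_darts_B]) (auto simp: reach_faces_def)

lemma reach_faces_lengths:
  assumes "\<And>d. d \<in> reach_darts \<Longrightarrow> k \<le> card (orbit_of face_succ d)"
  shows "k * card reach_faces \<le> 2 * CARD('a) * card R"
proof -
  have "k \<le> card (Q \<inter> reach_darts)" if "Q \<in> reach_faces" for Q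
    using reach_face_eq_orbit_of[OF that] assms orbit_of_face_succ by metis
  then have "card reach_faces * k \<le> (\<Sum>Q\<in>reach_faces. card (Q \<inter> reach_darts))"
    by (rule sum_bounded_below[where 'a = nat, simplified])
  also have "\<dots> \<le> 2 * CARD('a) * card R" using sum_reach_faces_le[of reach_darts] card_reach_darts by simp
  finally show ?thesis by (simp add: mult.commute)
qed

lemma reach_faces_binary:
  assumes m: "CARD('a) = 2" and no_cycle: "\<not> has_simple_cycle A 1" "\<not> has_simple_cycle A 2"
    "\<not> has_simple_cycle A 3" "\<not> has_simple_cycle A 4"
  shows "10 * card reach_faces + 2 * card (states A) \<le> 10 * card R"
proof -
  have "10 \<le> 2 * card (Q \<inter> reach_darts) + card (Q \<inter> backtracking)" if Q: "Q \<in> reach_faces" for Q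
  proof -
    obtain d where d: "d \<in> reach_darts" "Q = orbit_of reach_face_perm d" using reach_face_eq_orbit_of[OF Q] .
    have Q: "Q \<inter> reach_darts = orbit_of face_succ d"
      "Q \<inter> backtracking = orbit_of face_succ d \<inter> backtracking"
      using orbit_of_face_succ[OF d(1)] d(2) unfolding backtracking_def by auto
    show ?thesis
      using face_length_ge4[OF no_cycle(1-3) d(1)] face_length4_backtracking[OF no_cycle(1,2,4) d(1)]
      unfolding Q by (cases "card (orbit_of face_succ d) = 4") auto
  qed
  then have "card reach_faces * 10
      \<le> (\<Sum>Q\<in>reach_faces. 2 * card (Q \<inter> reach_darts) + card (Q \<inter> backtracking))"
    by (rule sum_bounded_below[where 'a = nat, simplified])
  also have "\<dots> = 2 * (\<Sum>Q\<in>reach_faces. card (Q \<inter> reach_darts))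
      + (\<Sum>Q\<in>reach_faces. card (Q \<inter> backtracking))"
    by (simp add: sum.distrib sum_distrib_left)
  also have "\<dots> \<le> 2 * card reach_darts + card backtracking"
    using sum_reach_faces_le[of reach_darts] sum_reach_faces_le[of backtracking]
    unfolding backtracking_def by (intro add_mono) auto
  finally show ?thesis
    using card_backtracking card_vertex_image_collapsing card_vertex_image_ge card_reach_darts m
    by simp
qed

lemma genus_bound:
  assumes no_short_cycles: "\<forall>k. k \<le> rho CARD('a) - 1 \<longrightarrow> \<not> has_simple_cycle A k"
    and euler: "int (card (states B)) - int (card (edges B)) + int (num_faces B \<sigma>)
      = 2 * int (num_components B) - 2 * int g"
  shows "10 + int (card (states A)) \<le> 10 * int g"
proof -
  define m n nA F where "m = CARD('a)" and "n = card R" and "nA = card (states A)"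
    and "F = card reach_faces"
  have "2 + (int m - 1) * int n - int F \<le> 2 * int g"
    using genus_lower_bound[OF euler] unfolding m_def n_def F_def .
  then have g: "2 + int m * int n - int n - int F \<le> 2 * int g" by (simp add: algebra_simps)
  have "nA \<le> n" unfolding nA_def n_def by (rule card_states_minimal_le_reachable[OF min dfaB langB])
  then have nA: "int nA \<le> int n" by simp
  have no_cycle: "\<not> has_simple_cycle A k" if "0 < k" "k < rho m" for k
    using no_short_cycles that unfolding m_def by auto
  consider "4 \<le> m" | "m = 3" | "m = 2" using two_letters unfolding m_def by linarith
  then have "10 + int nA \<le> 10 * int g"
  proof cases
    case 1
    then have "\<not> has_simple_cycle A 1" "\<not> has_simple_cycle A 2" using no_cycle unfolding rho_def by auto
    then have "3 * F \<le> 2 * m * n"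
      unfolding m_def n_def F_def by (rule reach_faces_lengths[OF face_length_ge3])
    then have "int (3 * F) \<le> int (2 * m * n)" by (simp only: of_nat_le_iff)
    then have "3 * int F \<le> 2 * (int m * int n)" by simp
    moreover have "4 * int n \<le> int m * int n" using 1 by (simp add: mult_right_mono)
    ultimately show ?thesis using g nA by linarith
  next
    case 2
    then have "\<not> has_simple_cycle A 1" "\<not> has_simple_cycle A 2" "\<not> has_simple_cycle A 3"
      using no_cycle unfolding rho_def by auto
    then have "4 * F \<le> 2 * m * n"
      unfolding m_def n_def F_def by (rule reach_faces_lengths[OF face_length_ge4])
    then have "int (4 * F) \<le> int (6 * n)" using 2 by simp
    moreover have "int m * int n = 3 * int n" using 2 by simp
    ultimately show ?thesis using g nA by linarith
  next
    case 3
    moreover have "\<not> has_simple_cycle A k" if "k \<in> {1, 2, 3, 4}" for k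
      using no_cycle that 3 unfolding rho_def by auto
    ultimately have "10 * F + 2 * nA \<le> 10 * n"
      unfolding m_def n_def F_def nA_def by (intro reach_faces_binary) auto
    then have "10 * int F + 2 * int nA \<le> 10 * int n" by linarith
    moreover have "int m * int n = 2 * int n" using 3 by simp
    ultimately show ?thesis using g by linarith
  qed
  then show ?thesis unfolding nA_def .
qed

end

section \<open>The genus of languages in C(m)\<close>

lemma lang_genus_attained:
  assumes "is_dfa A" "lang A = L"
  obtains B where "is_dfa B" "lang B = L" "dfa_genus B = lang_genus L"
proof -
  have "\<exists>g B. is_dfa B \<and> lang B = L \<and> dfa_genus B = g" using assms by blast
  from LeastI_ex[OF this] show ?thesis using that unfolding lang_genus_def by blast
qed

lemma classC_minimal_dfa_genus_bound:
  fixes L :: "'a::finite list set"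
  assumes L: "L \<in> classC" and m: "2 \<le> CARD('a)"
  obtains A where "minimal_dfa A L" "10 + card (states A) \<le> 10 * lang_genus L"
proof -
  obtain A where A: "minimal_dfa A L"
    and no_short_cycles: "\<forall>k. k \<le> rho CARD('a) - 1 \<longrightarrow> \<not> has_simple_cycle A k"
    using L unfolding classC_def by blast
  then have "is_dfa A" "lang A = L" unfolding minimal_dfa_def by auto
  then obtain B where B: "is_dfa B" "lang B = L" "dfa_genus B = lang_genus L"
    by (rule lang_genus_attained)
  obtain \<sigma> where "rotation_system B \<sigma>" and euler: "int (card (states B)) - int (card (edges B))
      + int (num_faces B \<sigma>) = 2 * int (num_components B) - 2 * int (dfa_genus B)"
    by (rule dfa_genus_euler[OF B(1)])
  then interpret dfa_embedding_over_minimal A B L \<sigma>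
    using A B m by unfold_locales
  have "10 + int (card (states A)) \<le> 10 * int (lang_genus L)"
    using genus_bound[OF no_short_cycles euler] B(3) by simp
  then show ?thesis using that[OF A] by linarith
qed

theorem mainTheorem9:
  assumes "CARD('a::finite) \<ge> 2"
  shows "(\<forall>L \<in> (classC :: 'a list set set). lang_genus L \<ge> 2) \<and>
         (\<forall>g::nat. g \<ge> 2 \<longrightarrow> finite {L \<in> (classC :: 'a list set set). lang_genus L = g})"
proof (intro conjI ballI allI impI)
  fix L :: "'a list set" assume "L \<in> classC"
  then obtain A where A: "minimal_dfa A L" "10 + card (states A) \<le> 10 * lang_genus L"
    using classC_minimal_dfa_genus_bound assms by blast
  moreover have "0 < card (states A)"
    using A(1) unfolding minimal_dfa_def is_dfa_def by (auto simp: card_gt_0_iff)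
  ultimately show "2 \<le> lang_genus L" using A(2) by linarith
next
  fix g :: nat
  have "{L \<in> (classC :: 'a list set set). lang_genus L = g}
      \<subseteq> {lang A | A :: 'a dfa. is_dfa A \<and> card (states A) \<le> 10 * g}"
  proof
    fix L assume "L \<in> {L \<in> (classC :: 'a list set set). lang_genus L = g}"
    then obtain A where "minimal_dfa A L" "10 + card (states A) \<le> 10 * g"
      using classC_minimal_dfa_genus_bound assms by blast
    then show "L \<in> {lang A | A :: 'a dfa. is_dfa A \<and> card (states A) \<le> 10 * g}"
      unfolding minimal_dfa_def by auto
  qed
  then show "finite {L \<in> (classC :: 'a list set set). lang_genus L = g}"
    using finite_subset finite_langs_card_states_le by blast
qed

end
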